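(* Let $0<p<\infty$ and $\phi$ be an Orlicz function with $\alpha_\phi>0$. Then the following conditions are equivalent: (i) the Orlicz space $L_\phi$ is $p$-convex; (ii) $L_\phi$ satisfies an upper $p$-estimate; (iii) $\phi$ satisfies condition $\Delta^{*p}$.
   Context: Let $(\Omega,\Sigma,\mu)$ be a $\sigma$-finite measure space which is either non-atomic with $\mu(\Omega)=\infty$, or non-atomic with $\mu(\Omega)<\infty$, or $\mathbb{N}$ with counting measure. An Orlicz function is $\phi:\mathbb{R}_+\to\mathbb{R}_+$ with $\phi(0)=0$, strictly increasing, continuous, $\lim_{u\to\infty}\phi(u)=\infty$. The Orlicz space $L_\phi$ is the set of measurable $f$ with $\int_\Omega\phi(\lambda|f|)\,d\mu<\infty$ for some $\lambda>0$, equipped with $\|f\|=\inf\{\varepsilon>0:\int_\Omega\phi(|f|/\varepsilon)\,d\mu\le1\}$. The lower Matuszewska–Orlicz index is $\alpha_\phi=\sup\{p\in\mathbb{R}: \exists c>0$ with $\phi(au)\ge ca^p\phi(u)$ for all $a\ge1$ and all relevant $u\}$; the assumption $\alpha_\phi>0$ is equivalent to $\|\cdot\|$ being a quasi-norm, so $L_\phi$ is a quasi-Banach lattice. $L_\phi$ is $p$-convex if there is $C_p>0$ with $\|(\sum_{i=1}^n|f_i|^p)^{1/p}\|\le C_p(\sum_{i=1}^n\|f_i\|^p)^{1/p}$ for all $f_1,\dots,f_n\in L_\phi$; it satisfies an upper $p$-estimate if this inequality holds for all disjointly supported $f_1,\dots,f_n$. $\phi$ satisfies $\Delta^{*p}$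 if there is $K>0$ with $\phi(au)\ge Ka^p\phi(u)$ for all $a\ge1$ and $u\ge0$ (for all arguments), resp. $u\ge v$ for some $v\ge0$ (large arguments), resp. $au\le v$ for some $v>0$ (small arguments). Convention: the versions for all arguments, large arguments, and small arguments (of $\Delta^{*p}$ and of the index) are used when $\mu$ is non-atomic infinite, non-atomic finite, and counting measure on $\mathbb{N}$, respectively. *)

theory Defs
  imports "HOL-Analysis.Analysis"
begin

text \<open>Orlicz functions (only their values on [0,\<infinity>) matter).\<close>
definition orlicz_function :: "(real \<Rightarrow> real) \<Rightarrow> bool" where
  "orlicz_function \<phi> \<longleftrightarrow>
     \<phi> 0 = 0 \<and> (\<forall>u\<ge>0. \<phi> u \<ge> 0) \<and> strict_mono_on {0..} \<phi> \<and>
     continuous_on {0..} \<phi> \<and> filterlim \<phi> at_top at_top"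

definition nonatomic :: "'a measure \<Rightarrow> bool" where
  "nonatomic M \<longleftrightarrow> (\<forall>A\<in>sets M. emeasure M A > 0 \<longrightarrow>
       (\<exists>B\<in>sets M. B \<subseteq> A \<and> 0 < emeasure M B \<and> emeasure M B < emeasure M A))"

datatype regime = All_Args | Large_Args | Small_Args

text \<open>Which measure space goes with which regime (convention of the paper).
  The counting measure on \<open>\<nat>\<close> is represented by counting measure on a countably infinite set.\<close>
fun measure_regime :: "'a measure \<Rightarrow> regime \<Rightarrow> bool" where
  "measure_regime M All_Args \<longleftrightarrow> nonatomic M \<and> emeasure M (space M) = \<infinity>"
| "measure_regime M Large_Args \<longleftrightarrow> nonatomic M \<and> 0 < emeasure M (space M) \<and> emeasure M (space M) < \<infinity>"
| "measure_regime M Small_Args \<longleftrightarrow> M = count_space (space M) \<and>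
       (\<exists>g::nat \<Rightarrow> 'a. bij_betw g UNIV (space M))"

fun delta_star :: "regime \<Rightarrow> real \<Rightarrow> (real \<Rightarrow> real) \<Rightarrow> bool" where
  "delta_star All_Args p \<phi> \<longleftrightarrow>
     (\<exists>K>0. \<forall>a\<ge>1. \<forall>u\<ge>0. \<phi> (a * u) \<ge> K * a powr p * \<phi> u)"
| "delta_star Large_Args p \<phi> \<longleftrightarrow>
     (\<exists>K>0. \<exists>v\<ge>0. \<forall>a\<ge>1. \<forall>u\<ge>v. \<phi> (a * u) \<ge> K * a powr p * \<phi> u)"
| "delta_star Small_Args p \<phi> \<longleftrightarrow>
     (\<exists>K>0. \<exists>v>0. \<forall>a\<ge>1. \<forall>u\<ge>0. a * u \<le> v \<longrightarrow> \<phi> (a * u) \<ge> K * a powr p * \<phi> u)"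

text \<open>Lower Matuszewska--Orlicz index (as an extended real, since the set may be unbounded).\<close>
definition lower_index :: "regime \<Rightarrow> (real \<Rightarrow> real) \<Rightarrow> ereal" where
  "lower_index r \<phi> = Sup (ereal ` {p. delta_star r p \<phi>})"

definition orlicz_space :: "'a measure \<Rightarrow> (real \<Rightarrow> real) \<Rightarrow> ('a \<Rightarrow> real) set" where
  "orlicz_space M \<phi> = {f \<in> borel_measurable M.
      \<exists>c>0. (\<integral>\<^sup>+ x. ennreal (\<phi> (c * \<bar>f x\<bar>)) \<partial>M) < \<infinity>}"

definition orlicz_norm :: "'a measure \<Rightarrow> (real \<Rightarrow> real) \<Rightarrow> ('a \<Rightarrow> real) \<Rightarrow> real" where
  "orlicz_norm M \<phi> f = Inf {\<epsilon>. \<epsilon> > 0 \<and> (\<integral>\<^sup>+ x. ennreal (\<phi> (\<bar>f x\<bar> / \<epsilon>)) \<partial>M) \<le> 1}"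

definition p_convex :: "'a measure \<Rightarrow> (real \<Rightarrow> real) \<Rightarrow> real \<Rightarrow> bool" where
  "p_convex M \<phi> p \<longleftrightarrow> (\<exists>C>0. \<forall>n. \<forall>f :: nat \<Rightarrow> 'a \<Rightarrow> real.
      (\<forall>i<n. f i \<in> orlicz_space M \<phi>) \<longrightarrow>
      orlicz_norm M \<phi> (\<lambda>x. (\<Sum>i<n. \<bar>f i x\<bar> powr p) powr (1 / p))
        \<le> C * (\<Sum>i<n. orlicz_norm M \<phi> (f i) powr p) powr (1 / p))"

definition upper_p_estimate :: "'a measure \<Rightarrow> (real \<Rightarrow> real) \<Rightarrow> real \<Rightarrow> bool" where
  "upper_p_estimate M \<phi> p \<longleftrightarrow> (\<exists>C>0. \<forall>n. \<forall>f :: nat \<Rightarrow> 'a \<Rightarrow> real.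
      (\<forall>i<n. f i \<in> orlicz_space M \<phi>) \<longrightarrow>
      (\<forall>i<n. \<forall>j<n. i \<noteq> j \<longrightarrow> (\<forall>x. f i x = 0 \<or> f j x = 0)) \<longrightarrow>
      orlicz_norm M \<phi> (\<lambda>x. (\<Sum>i<n. \<bar>f i x\<bar> powr p) powr (1 / p))
        \<le> C * (\<Sum>i<n. orlicz_norm M \<phi> (f i) powr p) powr (1 / p))"

end

theory Submission
  imports Defs
begin

(* (i) => (ii) is trivial.  For (ii) => (iii), test the upper estimate on the
   indicators of n disjoint sets of measure s: such an indicator has Luxemburg norm about
   1 / phi^-1 (1 / s), so the estimate gives phi^-1 (1 / s) <= C n^(1/p) phi^-1 (1 / (n s)).
   Taking s = 1 / phi (a u) and n ~ phi (a u) / phi u yields phi (a u) >= K a^p phi u.  The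
   test sets exist by Sierpinski's theorem in the non-atomic case and as blocks of points on N;
   the total measure decides which arguments u can be reached, which is why the three versions
   of Delta*p appear.
   For (iii) => (i), Delta*p says that psi t = phi (t^(1/p)) satisfies psi (b t) >= K b psi t
   for b >= 1, which makes psi convex up to constants: K psi (m / 2) <= sum l_i psi (y_i) for the
   l-mean m of the y_i.  Applied pointwise with weights l_i = eps_i^p / sum eps_j^p to
   y_i = (|f_i| / eps_i)^p and integrated, this bounds the modular of
   c (sum |f_i|^p)^(1/p) / (sum eps_i^p)^(1/p) by 1.  If Delta*p only holds for large arguments,
   the error is absorbed by the finite measure of the space; if only for small arguments, the
   modular bound itself keeps each |f_i| / eps_i bounded on N. *)

section \<open>Non-atomic measures\<close>

lemma nonatomic_half_subset:
  assumes "nonatomic M" "B \<in> sets M" "0 < emeasure M B" "emeasure M B < \<infinity>"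
  obtains C where "C \<in> sets M" "C \<subseteq> B" "0 < measure M C" "measure M C \<le> measure M B / 2"
proof -
  obtain D where D: "D \<in> sets M" "D \<subseteq> B" "0 < emeasure M D" "emeasure M D < emeasure M B"
    using assms unfolding nonatomic_def by blast
  have "emeasure M D < \<infinity>" using D(4) assms(4) by order
  then have mD: "0 < measure M D" "measure M D < measure M B"
    using D assms(4) by (auto simp: emeasure_eq_ennreal_measure ennreal_less_iff)
  have mBD: "measure M (B - D) = measure M B - measure M D"
    using assms(2,4) D(1,2) by (intro measure_Diff) auto
  show thesis
  proof (cases "measure M D \<le> measure M B / 2")
    case True
    then show thesis using that D mD by blast
  next
    case False
    then show thesis using that[of "B - D"] D mD mBD assms(2) by auto
  qed
qed

lemma nonatomic_small_subset:
  assumes na: "nonatomic M" and Z: "Z \<in> sets M" "0 < emeasure M Z" "emeasure M Z < \<infinity>" and "0 < e"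
  obtains B where "B \<in> sets M" "B \<subseteq> Z" "0 < measure M B" "measure M B \<le> e"
proof -
  have "\<exists>B\<in>sets M. B \<subseteq> Z \<and> 0 < measure M B \<and> measure M B \<le> measure M Z / 2 ^ k" for k
  proof (induction k)
    case 0
    then show ?case using Z by (auto simp: emeasure_eq_ennreal_measure)
  next
    case (Suc k)
    then obtain B where B: "B \<in> sets M" "B \<subseteq> Z" "0 < measure M B" "measure M B \<le> measure M Z / 2 ^ k"
      by blast
    have "emeasure M B < \<infinity>" using emeasure_mono[OF B(2) Z(1)] Z(3) by order
    then obtain C where C: "C \<in> sets M" "C \<subseteq> B" "0 < measure M C" "measure M C \<le> measure M B / 2"
      using nonatomic_half_subset[OF na B(1)] B(3) by (auto simp: emeasure_eq_ennreal_measure)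
    have "measure M C \<le> measure M Z / 2 ^ k / 2"
      using C(4) B(4) by (meson divide_right_mono order_trans zero_le_numeral)
    then show ?case using B C by (intro bexI[of _ C]) auto
  qed
  moreover obtain k :: nat where "measure M Z / e < 2 ^ k" using real_arch_pow[of 2] by auto
  then have "measure M Z / 2 ^ k \<le> e" using \<open>0 < e\<close> by (simp add: field_simps)
  ultimately show thesis using that by (meson order_trans)
qed

lemma obtain_half_maximizer:
  fixes g :: "'b \<Rightarrow> real"
  assumes "x0 \<in> S" and bounds: "\<And>x. x \<in> S \<Longrightarrow> 0 \<le> g x \<and> g x \<le> b"
  obtains x where "x \<in> S" "\<And>y. y \<in> S \<Longrightarrow> g y \<le> 2 * g x"
proof -
  have ne: "g ` S \<noteq> {}" and bdd: "bdd_above (g ` S)"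
    using assms by (auto intro!: bdd_aboveI[of _ b])
  have upper: "g y \<le> Sup (g ` S)" if "y \<in> S" for y
    using that bdd by (intro cSup_upper) auto
  show thesis
  proof (cases "Sup (g ` S) \<le> 0")
    case True
    then show thesis using that[of x0] upper assms by fastforce
  next
    case False
    then obtain x where "x \<in> S" "Sup (g ` S) / 2 < g x"
      using less_cSup_iff[OF ne bdd, of "Sup (g ` S) / 2"] by auto
    then show thesis using that[of x] upper by fastforce
  qed
qed

lemma half_maximal_subset:
  assumes "measure M A \<le> t"
  obtains B where "B \<in> sets M" "B \<subseteq> Y - A" "measure M B \<le> t - measure M A"
    "\<And>D. D \<in> sets M \<Longrightarrow> D \<subseteq> Y - A \<Longrightarrow> measure M D \<le> t - measure M A \<Longrightarrow>
      measure M D \<le> 2 * measure M B"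
proof -
  define S where "S = {B \<in> sets M. B \<subseteq> Y - A \<and> measure M B \<le> t - measure M A}"
  have "0 \<le> measure M B \<and> measure M B \<le> t" if "B \<in> S" for B
  proof -
    have "measure M B \<le> t - measure M A" using that by (simp add: S_def)
    then show ?thesis using measure_nonneg[of M A] measure_nonneg[of M B] by linarith
  qed
  moreover have "{} \<in> S" using assms by (simp add: S_def)
  ultimately obtain B where "B \<in> S" "\<And>D. D \<in> S \<Longrightarrow> measure M D \<le> 2 * measure M B"
    using obtain_half_maximizer[of "{}" S "measure M" t] by blast
  then show thesis using that by (auto simp: S_def)
qed

lemma greedy_exhaustion_sequence:
  assumes Y: "Y \<in> sets M" "emeasure M Y < \<infinity>" and t: "0 \<le> t"
  obtains As :: "nat \<Rightarrow> 'a set" and b :: "nat \<Rightarrow> real"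
  where "incseq As" "\<And>k. As k \<in> sets M" "\<And>k. As k \<subseteq> Y"
    "\<And>k. measure M (As k) = (\<Sum>j<k. b j)" "\<And>k. measure M (As k) \<le> t"
    "\<And>k D. D \<in> sets M \<Longrightarrow> D \<subseteq> Y - As k \<Longrightarrow> measure M D \<le> t - measure M (As k) \<Longrightarrow>
      measure M D \<le> 2 * b k"
proof -
  have fin: "emeasure M A < \<infinity>" if "A \<in> sets M" "A \<subseteq> Y" for A
    using emeasure_mono[OF that(2) Y(1)] Y(2) by order
  define admissible where
    "admissible A B \<longleftrightarrow> B \<in> sets M \<and> B \<subseteq> Y - A \<and> measure M B \<le> t - measure M A" for A B
  have "\<exists>B. admissible A B \<and> (\<forall>D. admissible A D \<longrightarrow> measure M D \<le> 2 * measure M B)"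
    if "measure M A \<le> t" for A
    using half_maximal_subset[where Y = Y, OF that] unfolding admissible_def by metis
  then obtain step where step: "\<And>A. measure M A \<le> t \<Longrightarrow>
      admissible A (step A) \<and> (\<forall>D. admissible A D \<longrightarrow> measure M D \<le> 2 * measure M (step A))"
    by metis
  define As where "As = rec_nat {} (\<lambda>k A. A \<union> step A)"
  define b where "b k = measure M (step (As k))" for k
  have As0: "As 0 = {}" and AsS: "As (Suc k) = As k \<union> step (As k)" for k
    by (simp_all add: As_def)
  have inv: "As k \<in> sets M \<and> As k \<subseteq> Y \<and> measure M (As k) = (\<Sum>j<k. b j) \<and> measure M (As k) \<le> t" for k
  proof (induction k)
    case 0
    then show ?case using t by (simp add: As0)
  next
    case (Suc k)
    then have s: "admissible (As k) (step (As k))" using step by blast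
    then have sub: "step (As k) \<in> sets M" "step (As k) \<subseteq> Y - As k" by (auto simp: admissible_def)
    then have "measure M (As (Suc k)) = measure M (As k) + b k"
      unfolding AsS b_def using Suc fin[of "As k"] fin[of "step (As k)"]
      by (intro measure_Union) (auto simp: less_top)
    then show ?case using Suc s by (auto simp: AsS admissible_def b_def)
  qed
  show thesis
  proof (rule that[of As b])
    show "incseq As" unfolding incseq_Suc_iff AsS by auto
    show "measure M D \<le> 2 * b k"
      if "D \<in> sets M" "D \<subseteq> Y - As k" "measure M D \<le> t - measure M (As k)" for k D
      using that step[of "As k"] inv[of k] by (simp add: admissible_def b_def)
  qed (use inv in blast)+
qed

lemma nonatomic_sierpinski:
  assumes na: "nonatomic M" and Y: "Y \<in> sets M" "emeasure M Y < \<infinity>"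
    and t: "0 \<le> t" "t \<le> measure M Y"
  obtains A where "A \<in> sets M" "A \<subseteq> Y" "measure M A = t"
proof -
  \<comment> \<open>a greedy exhaustion can only stop at measure \<open>t\<close>, since non-atomicity provides small admissible sets\<close>
  obtain As b where As: "incseq As" "\<And>k. As k \<in> sets M" "\<And>k. As k \<subseteq> Y"
    "\<And>k. measure M (As k) = (\<Sum>j<k. b j)" "\<And>k. measure M (As k) \<le> t"
    and greedy: "\<And>k D. D \<in> sets M \<Longrightarrow> D \<subseteq> Y - As k \<Longrightarrow> measure M D \<le> t - measure M (As k) \<Longrightarrow>
      measure M D \<le> 2 * b k"
    using greedy_exhaustion_sequence[OF Y t(1)] by blast
  have fin: "emeasure M A < \<infinity>" if "A \<in> sets M" "A \<subseteq> Y" for A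
    using emeasure_mono[OF that(2) Y(1)] Y(2) by order
  define A where "A = (\<Union>k. As k)"
  have A: "A \<in> sets M" "A \<subseteq> Y" using As by (auto simp: A_def)
  have lim: "(\<lambda>k. measure M (As k)) \<longlonglongrightarrow> measure M A"
    unfolding A_def using As fin[OF A] by (intro Lim_measure_incseq) (auto simp: A_def)
  have mA: "measure M A \<le> t" using As(5) by (intro LIMSEQ_le_const2[OF lim]) blast
  have "b sums measure M A" using lim As(4) by (simp add: sums_def)
  then have b0: "b \<longlonglongrightarrow> 0" by (intro summable_LIMSEQ_zero sums_summable)
  have "\<not> measure M A < t"
  proof
    assume lt: "measure M A < t"
    have "measure M (Y - A) = measure M Y - measure M A"
      using Y A by (intro measure_Diff) auto
    then have "0 < emeasure M (Y - A)"
      using lt t fin[of "Y - A"] Y A by (auto simp: emeasure_eq_ennreal_measure)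
    then obtain B where B: "B \<in> sets M" "B \<subseteq> Y - A" "0 < measure M B" "measure M B \<le> t - measure M A"
      using nonatomic_small_subset[OF na _ _ fin, of "Y - A" "t - measure M A"] Y A lt by auto
    have B_le: "measure M B \<le> 2 * b k" for k
    proof (rule greedy[OF B(1)])
      have "As k \<subseteq> A" by (auto simp: A_def)
      then show "B \<subseteq> Y - As k" using B(2) by blast
      have "measure M (As k) \<le> measure M A"
        using As A fin \<open>As k \<subseteq> A\<close> by (intro measure_mono_fmeasurable) (auto simp: fmeasurable_def)
      then show "measure M B \<le> t - measure M (As k)" using B(4) by linarith
    qed
    obtain k where "b k < measure M B / 2"
      using order_tendstoD(2)[OF b0, of "measure M B / 2"] B(3)
      by (metis eventually_sequentially half_gt_zero order_refl)
    then show False using B_le[of k] by linarith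
  qed
  then show thesis using that[OF A] mA by linarith
qed

lemma nonatomic_disjoint_family:
  fixes n :: nat and s :: real
  assumes na: "nonatomic M" and Y: "Y \<in> sets M" "emeasure M Y < \<infinity>"
    and s: "0 \<le> s" "n * s \<le> measure M Y"
  shows "\<exists>A. (\<forall>i<n. A i \<in> sets M \<and> A i \<subseteq> Y \<and> emeasure M (A i) = ennreal s)
    \<and> disjoint_family_on A {..<n}"
  using s(2)
proof (induction n)
  case 0
  then show ?case by (auto simp: disjoint_family_on_def)
next
  case (Suc n)
  then obtain A where A: "\<forall>i<n. A i \<in> sets M \<and> A i \<subseteq> Y \<and> emeasure M (A i) = ennreal s"
    "disjoint_family_on A {..<n}"
    using s(1) by (auto simp: algebra_simps)
  define U where "U = (\<Union>i<n. A i)"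
  have U: "U \<in> sets M" "U \<subseteq> Y" using A by (auto simp: U_def)
  have "measure M U \<le> (\<Sum>i<n. measure M (A i))"
    unfolding U_def using A by (intro measure_UNION_le) auto
  also have "\<dots> = n * s" using A s(1) by (simp add: measure_def)
  finally have "measure M U \<le> n * s" .
  moreover have "emeasure M (Y - U) < \<infinity>" using emeasure_mono[of "Y - U" Y M] Y by auto
  moreover have "measure M (Y - U) = measure M Y - measure M U" using Y U by (intro measure_Diff) auto
  ultimately obtain B where B: "B \<in> sets M" "B \<subseteq> Y - U" "measure M B = s"
    using nonatomic_sierpinski[OF na, of "Y - U" s] Y U Suc.prems s(1) by (auto simp: algebra_simps)
  have BY: "B \<subseteq> Y" using B(2) by blast
  have "emeasure M B < \<infinity>" using emeasure_mono[OF BY Y(1)] Y(2) by order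
  then have eB: "emeasure M B = ennreal s" using B(3) by (simp add: emeasure_eq_ennreal_measure less_top)
  moreover have "disjoint_family_on (A(n := B)) {..<Suc n}"
    using A(2) B(2) unfolding disjoint_family_on_def U_def by auto
  moreover have "\<forall>i<Suc n. (A(n := B)) i \<in> sets M \<and> (A(n := B)) i \<subseteq> Y
      \<and> emeasure M ((A(n := B)) i) = ennreal s"
    using A B(1) BY eB by (auto simp: less_Suc_eq)
  ultimately show ?case by blast
qed

lemma sigma_finite_large_subset:
  assumes "sigma_finite_measure M" "emeasure M (space M) = \<infinity>"
  obtains Y where "Y \<in> sets M" "emeasure M Y < \<infinity>" "T \<le> measure M Y"
proof -
  obtain A :: "nat \<Rightarrow> 'a set" where A: "range A \<subseteq> sets M" "\<Union> (range A) = space M"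
    "\<And>i. emeasure M (A i) \<noteq> \<infinity>" "incseq A"
    using sigma_finite_measure.sigma_finite_incseq[OF assms(1)] by metis
  have "(SUP i. emeasure M (A i)) = emeasure M (\<Union>i. A i)"
    using A by (intro SUP_emeasure_incseq) auto
  then have sup: "(SUP i. emeasure M (A i)) = \<infinity>"
    using A(2) assms(2) by simp
  have "ennreal (max T 0) < (SUP i. emeasure M (A i))" unfolding sup by simp
  then obtain i where "ennreal (max T 0) < emeasure M (A i)"
    by (auto simp: less_SUP_iff)
  then have "T < measure M (A i)"
    using A(3) by (auto simp: emeasure_eq_ennreal_measure ennreal_less_iff)
  then show thesis using that[of "A i"] A by (auto simp: less_top)
qed

section \<open>Orlicz functions and the Luxemburg norm\<close>

lemma orlicz_function_zero: "orlicz_function \<phi> \<Longrightarrow> \<phi> 0 = 0"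
  by (simp add: orlicz_function_def)

lemma orlicz_function_nonneg: "orlicz_function \<phi> \<Longrightarrow> 0 \<le> u \<Longrightarrow> 0 \<le> \<phi> u"
  by (simp add: orlicz_function_def)

lemma orlicz_function_strict_mono: "orlicz_function \<phi> \<Longrightarrow> 0 \<le> x \<Longrightarrow> x < y \<Longrightarrow> \<phi> x < \<phi> y"
  by (auto simp: orlicz_function_def strict_mono_on_def)

lemma orlicz_function_mono: "orlicz_function \<phi> \<Longrightarrow> 0 \<le> x \<Longrightarrow> x \<le> y \<Longrightarrow> \<phi> x \<le> \<phi> y"
  by (metis order_le_less orlicz_function_strict_mono)

lemma orlicz_function_pos: "orlicz_function \<phi> \<Longrightarrow> 0 < u \<Longrightarrow> 0 < \<phi> u"
  by (metis order_refl orlicz_function_strict_mono orlicz_function_zero)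

lemma orlicz_function_tendsto_zero:
  assumes "orlicz_function \<phi>" "(g \<longlongrightarrow> 0) F" "\<forall>\<^sub>F x in F. 0 \<le> g x"
  shows "((\<lambda>x. \<phi> (g x)) \<longlongrightarrow> 0) F"
proof -
  have "continuous_on {0..} \<phi>" using assms(1) by (simp add: orlicz_function_def)
  then have "((\<lambda>x. \<phi> (g x)) \<longlongrightarrow> \<phi> 0) F"
    by (rule continuous_on_tendsto_compose[OF _ assms(2)]) (use assms(3) in auto)
  then show ?thesis using orlicz_function_zero[OF assms(1)] by simp
qed

lemma orlicz_function_small:
  assumes "orlicz_function \<phi>" "0 < e"
  obtains y where "0 < y" "\<phi> y \<le> e"
proof -
  have "((\<lambda>k::nat. \<phi> (1 / Suc k)) \<longlongrightarrow> 0) sequentially"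
    by (intro orlicz_function_tendsto_zero[OF assms(1)] LIMSEQ_Suc[OF lim_const_over_n]) auto
  then have "\<forall>\<^sub>F k in sequentially. \<phi> (1 / Suc k) < e"
    using assms(2) by (intro order_tendstoD)
  then obtain k where "\<phi> (1 / Suc k) < e"
    by (meson eventually_sequentially order_refl)
  then show thesis using that[of "1 / Suc k"] by simp
qed

lemma orlicz_function_large:
  assumes "orlicz_function \<phi>"
  obtains y where "0 < y" "e \<le> \<phi> y"
proof -
  have "filterlim \<phi> at_top at_top" using assms by (simp add: orlicz_function_def)
  then obtain N where "\<And>x. N \<le> x \<Longrightarrow> e \<le> \<phi> x"
    by (auto simp: filterlim_at_top eventually_at_top_linorder)
  then show thesis using that[of "max N 1"] by simp
qed

lemma orlicz_function_small_quotient: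
  assumes phi: "orlicz_function \<phi>" and "0 \<le> v" "0 < e"
  obtains t where "1 \<le> t" "\<phi> (v / t) \<le> e"
proof -
  obtain y where y: "0 < y" "\<phi> y \<le> e" using orlicz_function_small[OF phi \<open>0 < e\<close>] .
  have "v \<le> y * max 1 (v / y)" using y(1) mult_left_mono[of "v / y" "max 1 (v / y)" y] by simp
  then have "v / max 1 (v / y) \<le> y" by (simp add: field_simps)
  then have "\<phi> (v / max 1 (v / y)) \<le> \<phi> y" using assms(2) by (intro orlicz_function_mono[OF phi]) auto
  then show thesis using that[of "max 1 (v / y)"] y(2) by simp
qed

lemma borel_measurable_orlicz_abs:
  assumes "orlicz_function \<phi>" "g \<in> borel_measurable M"
  shows "(\<lambda>x. \<phi> \<bar>g x\<bar>) \<in> borel_measurable M"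
proof -
  have "continuous_on {0..} \<phi>" using assms(1) by (simp add: orlicz_function_def)
  then have "continuous_on UNIV (\<lambda>x. \<phi> \<bar>x\<bar>)"
    by (rule continuous_on_compose2) (auto intro!: continuous_intros)
  then show ?thesis
    using measurable_compose[OF assms(2) borel_measurable_continuous_onI] by blast
qed

definition luxemburg_set :: "'a measure \<Rightarrow> (real \<Rightarrow> real) \<Rightarrow> ('a \<Rightarrow> real) \<Rightarrow> real set" where
  "luxemburg_set M \<phi> f = {\<epsilon>. 0 < \<epsilon> \<and> (\<integral>\<^sup>+ x. ennreal (\<phi> (\<bar>f x\<bar> / \<epsilon>)) \<partial>M) \<le> 1}"

lemma orlicz_norm_eq_Inf: "orlicz_norm M \<phi> f = Inf (luxemburg_set M \<phi> f)"
  by (simp add: orlicz_norm_def luxemburg_set_def)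

lemma luxemburg_set_nonempty:
  assumes phi: "orlicz_function \<phi>" and f: "f \<in> orlicz_space M \<phi>"
  shows "luxemburg_set M \<phi> f \<noteq> {}"
proof -
  obtain c where c: "0 < c" "(\<integral>\<^sup>+ x. ennreal (\<phi> (c * \<bar>f x\<bar>)) \<partial>M) < \<infinity>"
    and fm: "f \<in> borel_measurable M"
    using f by (auto simp: orlicz_space_def)
  define h where "h k x = ennreal (\<phi> (c * \<bar>f x\<bar> / Suc k))" for k x
  have hm: "h k \<in> borel_measurable M" for k
  proof -
    have "(\<lambda>x. \<phi> \<bar>c * f x / Suc k\<bar>) \<in> borel_measurable M"
      using fm by (intro borel_measurable_orlicz_abs[OF phi]) auto
    then show ?thesis unfolding h_def using c(1) by (simp add: abs_mult)
  qed
  have dec: "h (Suc k) x \<le> h k x" for k x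
    unfolding h_def using c(1) by (intro ennreal_leI orlicz_function_mono[OF phi]) (auto simp: frac_le)
  have "(\<lambda>k. h k x) \<longlonglongrightarrow> ennreal 0" for x
    unfolding h_def using c(1)
    by (intro tendsto_ennrealI orlicz_function_tendsto_zero[OF phi] LIMSEQ_Suc[OF lim_const_over_n]) auto
  moreover have "(\<lambda>k. h k x) \<longlonglongrightarrow> (INF k. h k x)" for x
    using dec by (intro LIMSEQ_INF) (simp add: decseq_Suc_iff)
  ultimately have "(INF k. h k x) = 0" for x using LIMSEQ_unique by fastforce
  moreover have "(\<integral>\<^sup>+ x. (INF k. h k x) \<partial>M) = (INF k. integral\<^sup>N M (h k))"
  proof (rule nn_integral_monotone_convergence_INF_AE')
    show "(\<integral>\<^sup>+ x. h 0 x \<partial>M) < \<infinity>" using c(2) by (simp add: h_def)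
  qed (use dec hm in auto)
  ultimately have "(INF k. integral\<^sup>N M (h k)) < 1" by simp
  then obtain k where k: "integral\<^sup>N M (h k) < 1" by (auto simp: INF_less_iff)
  have "(\<integral>\<^sup>+ x. ennreal (\<phi> (\<bar>f x\<bar> / (Suc k / c))) \<partial>M) = (\<integral>\<^sup>+ x. h k x \<partial>M)"
    by (simp add: h_def field_simps)
  then have "Suc k / c \<in> luxemburg_set M \<phi> f"
    using k c(1) by (simp add: luxemburg_set_def)
  then show ?thesis by blast
qed

lemma luxemburg_set_upclosed:
  assumes phi: "orlicz_function \<phi>" and "e \<in> luxemburg_set M \<phi> f" "e \<le> e'"
  shows "e' \<in> luxemburg_set M \<phi> f"
proof -
  have "(\<integral>\<^sup>+ x. ennreal (\<phi> (\<bar>f x\<bar> / e')) \<partial>M) \<le> (\<integral>\<^sup>+ x. ennreal (\<phi> (\<bar>f x\<bar> / e)) \<partial>M)"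
    using assms(2,3) by (intro nn_integral_mono ennreal_leI orlicz_function_mono[OF phi])
      (auto simp: luxemburg_set_def intro!: divide_left_mono)
  then show ?thesis using assms(2,3) by (auto simp: luxemburg_set_def)
qed

lemma orlicz_norm_nonneg:
  assumes "orlicz_function \<phi>" "f \<in> orlicz_space M \<phi>"
  shows "0 \<le> orlicz_norm M \<phi> f"
  unfolding orlicz_norm_eq_Inf using luxemburg_set_nonempty[OF assms]
  by (intro cInf_greatest) (auto simp: luxemburg_set_def)

lemma orlicz_norm_le: "e \<in> luxemburg_set M \<phi> f \<Longrightarrow> orlicz_norm M \<phi> f \<le> e"
  unfolding orlicz_norm_eq_Inf
  by (rule cInf_lower) (auto simp: luxemburg_set_def intro!: bdd_belowI[of _ 0])

lemma luxemburg_set_above_norm: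
  assumes phi: "orlicz_function \<phi>" and f: "f \<in> orlicz_space M \<phi>" and "orlicz_norm M \<phi> f < e"
  shows "e \<in> luxemburg_set M \<phi> f"
proof -
  obtain e0 where "e0 \<in> luxemburg_set M \<phi> f" "e0 < e"
    using assms(3) cInf_lessD[OF luxemburg_set_nonempty[OF phi f]] unfolding orlicz_norm_eq_Inf by blast
  then show ?thesis using luxemburg_set_upclosed[OF phi] by force
qed

lemma orlicz_norm_zero:
  assumes "orlicz_function \<phi>" "\<And>x. g x = 0"
  shows "orlicz_norm M \<phi> g = 0"
proof -
  have "luxemburg_set M \<phi> g = {0<..}"
    using assms by (auto simp: luxemburg_set_def orlicz_function_zero)
  then show ?thesis by (simp add: orlicz_norm_eq_Inf)
qed

lemma nn_integral_orlicz_indicator: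
  assumes "orlicz_function \<phi>" "A \<in> sets M"
  shows "(\<integral>\<^sup>+ x. ennreal (\<phi> (\<bar>indicator A x :: real\<bar> / e)) \<partial>M) = ennreal (\<phi> (1 / e)) * emeasure M A"
proof -
  have "(\<integral>\<^sup>+ x. ennreal (\<phi> (\<bar>indicator A x :: real\<bar> / e)) \<partial>M)
      = (\<integral>\<^sup>+ x. ennreal (\<phi> (1 / e)) * indicator A x \<partial>M)"
    by (intro nn_integral_cong) (auto simp: indicator_def orlicz_function_zero[OF assms(1)])
  then show ?thesis using assms(2) by (simp add: nn_integral_cmult_indicator)
qed

lemma indicator_in_orlicz_space:
  assumes "orlicz_function \<phi>" "A \<in> sets M" "emeasure M A < \<infinity>"
  shows "(indicator A :: 'a \<Rightarrow> real) \<in> orlicz_space M \<phi>"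
  using nn_integral_orlicz_indicator[OF assms(1,2), of 1] assms(2,3)
  unfolding orlicz_space_def by (auto intro!: exI[of _ 1] simp: ennreal_mult_less_top)

lemma orlicz_norm_indicator_le:
  assumes phi: "orlicz_function \<phi>" and A: "A \<in> sets M" "emeasure M A = ennreal s" "0 \<le> s"
    and y: "0 < y" "s * \<phi> y \<le> 1"
  shows "orlicz_norm M \<phi> (indicator A) \<le> 1 / y"
proof (rule orlicz_norm_le)
  have "(\<integral>\<^sup>+ x. ennreal (\<phi> (\<bar>indicator A x :: real\<bar> / (1 / y))) \<partial>M) = ennreal (s * \<phi> y)"
    using nn_integral_orlicz_indicator[OF phi A(1), of "1 / y"] A(2,3) orlicz_function_nonneg[OF phi, of y] y(1)
    by (simp add: ennreal_mult mult.commute)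
  then show "1 / y \<in> luxemburg_set M \<phi> (indicator A)"
    using y by (simp add: luxemburg_set_def)
qed

lemma orlicz_norm_indicator_ge:
  assumes phi: "orlicz_function \<phi>" and A: "A \<in> sets M" "emeasure M A = ennreal s" "0 \<le> s"
    and y: "0 < y" "1 < s * \<phi> y"
  shows "1 / y \<le> orlicz_norm M \<phi> (indicator A)"
  unfolding orlicz_norm_eq_Inf
proof (rule cInf_greatest)
  show "luxemburg_set M \<phi> (indicator A) \<noteq> {}"
    using A by (intro luxemburg_set_nonempty[OF phi] indicator_in_orlicz_space[OF phi]) auto
  fix e assume e: "e \<in> luxemburg_set M \<phi> (indicator A)"
  then have "0 < e" by (simp add: luxemburg_set_def)
  have "ennreal (\<phi> (1 / e) * s) \<le> 1"
    using e nn_integral_orlicz_indicator[OF phi A(1), of e] A(2,3) orlicz_function_nonneg[OF phi, of "1 / e"] \<open>0 < e\<close>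
    by (simp add: luxemburg_set_def ennreal_mult)
  then have "\<phi> (1 / e) * s < s * \<phi> y" using y(2) by (simp add: ennreal_le_1 mult.commute)
  then have "\<phi> (1 / e) < \<phi> y" using A(3) by (simp add: mult.commute mult_less_cancel_left)
  then have "1 / e < y"
    using orlicz_function_mono[OF phi, of y "1 / e"] y(1) \<open>0 < e\<close> by force
  then show "1 / y \<le> e" using \<open>0 < e\<close> y(1) by (simp add: field_simps)
qed

section \<open>Upper \<open>p\<close>-estimates force \<open>\<Delta>\<^sup>*\<^sup>p\<close>\<close>

definition upper_p_estimate_with :: "'a measure \<Rightarrow> (real \<Rightarrow> real) \<Rightarrow> real \<Rightarrow> real \<Rightarrow> bool" where
  "upper_p_estimate_with M \<phi> p C \<longleftrightarrow> (\<forall>n. \<forall>f :: nat \<Rightarrow> 'a \<Rightarrow> real.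
      (\<forall>i<n. f i \<in> orlicz_space M \<phi>) \<longrightarrow>
      (\<forall>i<n. \<forall>j<n. i \<noteq> j \<longrightarrow> (\<forall>x. f i x = 0 \<or> f j x = 0)) \<longrightarrow>
      orlicz_norm M \<phi> (\<lambda>x. (\<Sum>i<n. \<bar>f i x\<bar> powr p) powr (1 / p))
        \<le> C * (\<Sum>i<n. orlicz_norm M \<phi> (f i) powr p) powr (1 / p))"

lemma upper_p_estimate_iff_with:
  "upper_p_estimate M \<phi> p \<longleftrightarrow> (\<exists>C>0. upper_p_estimate_with M \<phi> p C)"
  by (simp add: upper_p_estimate_def upper_p_estimate_with_def)

lemma upper_p_estimate_indicator_bound:
  fixes \<phi> :: "real \<Rightarrow> real" and A :: "nat \<Rightarrow> 'a set" and n :: nat and s y y' :: real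
  assumes phi: "orlicz_function \<phi>" and p: "0 < p" and C: "0 < C"
    and UE: "upper_p_estimate_with M \<phi> p C"
    and A: "\<And>i. i < n \<Longrightarrow> A i \<in> sets M" "\<And>i. i < n \<Longrightarrow> emeasure M (A i) = ennreal s"
      "disjoint_family_on A {..<n}"
    and s: "0 < s" and y: "0 < y" "0 < y'" "s * \<phi> y \<le> 1" "1 < n * s * \<phi> y'"
  shows "y \<le> C * n powr (1 / p) * y'"
proof -
  define f where "f i = (indicator (A i) :: 'a \<Rightarrow> real)" for i
  define U where "U = (\<Union>i<n. A i)"
  have f_space: "\<forall>i<n. f i \<in> orlicz_space M \<phi>"
    using A s by (auto simp: f_def intro!: indicator_in_orlicz_space[OF phi])
  have f_disj: "\<forall>i<n. \<forall>j<n. i \<noteq> j \<longrightarrow> (\<forall>x. f i x = 0 \<or> f j x = 0)"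
    using A(3) by (auto simp: f_def disjoint_family_on_def indicator_def)
  have sum_f: "(\<lambda>x. (\<Sum>i<n. \<bar>f i x\<bar> powr p) powr (1 / p)) = indicator U"
  proof
    fix x
    have "(\<Sum>i<n. \<bar>f i x\<bar> powr p) = (\<Sum>i<n. indicator (A i) x)"
      by (intro sum.cong) (auto simp: f_def indicator_def)
    also have "\<dots> = indicator U x"
      unfolding U_def by (rule indicator_UN_disjoint[OF finite_lessThan A(3), symmetric])
    finally show "(\<Sum>i<n. \<bar>f i x\<bar> powr p) powr (1 / p) = indicator U x"
      by (simp add: indicator_def)
  qed
  have "emeasure M U = (\<Sum>i<n. emeasure M (A i))"
    unfolding U_def using A by (intro sum_emeasure[symmetric]) auto
  also have "\<dots> = ennreal (n * s)"
    using A(2) s by (simp add: ennreal_of_nat_eq_real_of_nat ennreal_mult)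
  finally have mU: "emeasure M U = ennreal (n * s)" .
  have norm_f: "orlicz_norm M \<phi> (f i) powr p \<le> (1 / y) powr p" if "i < n" for i
    using orlicz_norm_indicator_le[OF phi A(1,2)[OF that]] orlicz_norm_nonneg[OF phi] f_space that s y p
    by (intro powr_mono2) (auto simp: f_def)
  have "1 / y' \<le> orlicz_norm M \<phi> (indicator U)"
    using orlicz_norm_indicator_ge[OF phi _ mU] A(1) s y by (auto simp: U_def mult.assoc)
  also have "\<dots> \<le> C * (\<Sum>i<n. orlicz_norm M \<phi> (f i) powr p) powr (1 / p)"
    using UE f_space f_disj unfolding upper_p_estimate_with_def sum_f[symmetric] by blast
  also have "\<dots> \<le> C * (n * (1 / y) powr p) powr (1 / p)"
    using sum_mono[of "{..<n}", OF norm_f] p C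
    by (intro mult_left_mono powr_mono2 sum_nonneg) auto
  also have "\<dots> = C * n powr (1 / p) / y"
    using p y by (simp add: powr_mult powr_powr powr_divide)
  finally show ?thesis using y by (simp add: field_simps)
qed

lemma upper_p_estimate_growth:
  fixes \<phi> :: "real \<Rightarrow> real" and A :: "nat \<Rightarrow> 'a set" and n :: nat and s a u c :: real
  assumes phi: "orlicz_function \<phi>" and p: "0 < p" and C: "0 < C"
    and UE: "upper_p_estimate_with M \<phi> p C"
    and A: "\<And>i. i < n \<Longrightarrow> A i \<in> sets M" "\<And>i. i < n \<Longrightarrow> emeasure M (A i) = ennreal s"
      "disjoint_family_on A {..<n}"
    and s: "0 < s" "s * \<phi> (a * u) \<le> 1" "1 < n * s * \<phi> u"
    and a: "1 \<le> a" and u: "0 < u" and c: "0 < c" "n * \<phi> u \<le> c * \<phi> (a * u)"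
  shows "1 / (c * C powr p) * a powr p * \<phi> u \<le> \<phi> (a * u)"
proof -
  have "a * u \<le> C * n powr (1 / p) * u"
    using a u by (intro upper_p_estimate_indicator_bound[OF phi p C UE A s(1)]) (use s in auto)
  then have "a powr p \<le> (C * n powr (1 / p)) powr p"
    using a u p by (intro powr_mono2) auto
  also have "\<dots> = C powr p * n"
    using C p by (simp add: powr_mult powr_powr)
  finally have "a powr p * \<phi> u \<le> (C powr p * n) * \<phi> u"
    using orlicz_function_nonneg[OF phi, of u] u by (intro mult_right_mono) auto
  also have "\<dots> = C powr p * (n * \<phi> u)" by simp
  also have "\<dots> \<le> C powr p * (c * \<phi> (a * u))"
    using c by (intro mult_left_mono) auto
  finally show ?thesis using c C by (simp add: field_simps)
qed

lemma nonatomic_upper_p_estimate_growth: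
  assumes na: "nonatomic M" and phi: "orlicz_function \<phi>" and p: "0 < p" and C: "0 < C"
    and UE: "upper_p_estimate_with M \<phi> p C" and a: "1 \<le> a" and u: "0 < u"
    and Y: "Y \<in> sets M" "emeasure M Y < \<infinity>" "2 / \<phi> u \<le> measure M Y"
  shows "1 / (2 * C powr p) * a powr p * \<phi> u \<le> \<phi> (a * u)"
proof -
  define w1 where "w1 = \<phi> u"
  define w2 where "w2 = \<phi> (a * u)"
  have w1: "0 < w1" using orlicz_function_pos[OF phi u] by (simp add: w1_def)
  have w12: "w1 \<le> w2"
    unfolding w1_def w2_def using a u by (intro orlicz_function_mono[OF phi]) auto
  \<comment> \<open>\<open>n\<close> sets of measure \<open>1 / w2\<close> with \<open>n \<approx> w2 / w1\<close> fit into \<open>Y\<close>\<close>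
  define n where "n = nat \<lfloor>w2 / w1\<rfloor> + 1"
  have "real n = of_int \<lfloor>w2 / w1\<rfloor> + 1" using w1 w12 by (simp add: n_def)
  then have n: "w2 / w1 < n" "n \<le> w2 / w1 + 1" by linarith+
  have "n * (1 / w2) \<le> 1 / w1 + 1 / w2"
    using n(2) w1 w12 by (simp add: field_simps)
  also have "\<dots> \<le> 2 / w1"
    using frac_le[of 1 1 w1 w2] w1 w12 by simp
  also have "\<dots> \<le> measure M Y"
    using Y(3) by (simp add: w1_def)
  finally obtain A where A: "\<forall>i<n. A i \<in> sets M \<and> A i \<subseteq> Y \<and> emeasure M (A i) = ennreal (1 / w2)"
    "disjoint_family_on A {..<n}"
    using nonatomic_disjoint_family[OF na Y(1,2), of "1 / w2" n] w1 w12 by auto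
  show ?thesis
  proof (rule upper_p_estimate_growth[OF phi p C UE _ _ A(2) _ _ _ a u])
    show "1 < n * (1 / w2) * \<phi> u" "n * \<phi> u \<le> 2 * \<phi> (a * u)"
      using n w1 w12 by (simp_all add: w1_def w2_def field_simps)
  qed (use A w1 w12 in \<open>auto simp: w2_def\<close>)
qed

lemma count_space_disjoint_family:
  fixes g :: "nat \<Rightarrow> 'a" and n m :: nat
  assumes "M = count_space (space M)" "bij_betw g UNIV (space M)"
  shows "\<exists>A. (\<forall>i<n. A i \<in> sets M \<and> emeasure M (A i) = ennreal m) \<and> disjoint_family_on A {..<n}"
proof -
  define A where "A i = g ` {i * m ..< (i + 1) * m}" for i
  have inj: "inj g" and sub: "A i \<subseteq> space M" for i
    using assms(2) by (auto simp: A_def bij_betw_def)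
  have "A i \<in> sets M" for i using sub assms(1) by (metis sets_count_space Pow_iff)
  moreover have "emeasure M (A i) = ennreal m" for i
  proof -
    have "card (A i) = m" unfolding A_def using inj by (simp add: card_image inj_on_subset)
    moreover have "emeasure (count_space (space M)) (A i) = of_nat (card (A i))"
      using sub by (intro emeasure_count_space_finite) (auto simp: A_def)
    ultimately show ?thesis using assms(1) by (simp add: ennreal_of_nat_eq_real_of_nat)
  qed
  moreover have "disjoint_family_on A {..<n}"
  proof (unfold disjoint_family_on_def, intro ballI impI)
    fix i j :: nat assume "i \<noteq> j"
    then have "i + 1 \<le> j \<or> j + 1 \<le> i" by linarith
    then have "(i + 1) * m \<le> j * m \<or> (j + 1) * m \<le> i * m"
      using mult_le_mono1 by blast
    then have "{i * m ..< (i + 1) * m} \<inter> {j * m ..< (j + 1) * m} = {}" by auto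
    then show "A i \<inter> A j = {}" unfolding A_def using inj by (simp add: image_Int[symmetric])
  qed
  ultimately show ?thesis by blast
qed

lemma upper_p_estimate_imp_delta_star_All:
  fixes M :: "'a measure"
  assumes sf: "sigma_finite_measure M" and na: "nonatomic M" and inf: "emeasure M (space M) = \<infinity>"
    and phi: "orlicz_function \<phi>" and p: "0 < p" and ue: "upper_p_estimate M \<phi> p"
  shows "delta_star All_Args p \<phi>"
proof -
  obtain C where C: "0 < C" and UE: "upper_p_estimate_with M \<phi> p C"
    using ue by (auto simp: upper_p_estimate_iff_with)
  have "1 / (2 * C powr p) * a powr p * \<phi> u \<le> \<phi> (a * u)" if a: "1 \<le> a" and u: "0 \<le> u" for a u
  proof (cases "u = 0")
    case True
    then show ?thesis by (simp add: orlicz_function_zero[OF phi])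
  next
    case False
    obtain Y where "Y \<in> sets M" "emeasure M Y < \<infinity>" "2 / \<phi> u \<le> measure M Y"
      using sigma_finite_large_subset[OF sf inf] .
    then show ?thesis
      using False u by (intro nonatomic_upper_p_estimate_growth[OF na phi p C UE a]) auto
  qed
  then show ?thesis using C by (auto intro!: exI[of _ "1 / (2 * C powr p)"])
qed

lemma upper_p_estimate_imp_delta_star_Large:
  fixes M :: "'a measure"
  assumes na: "nonatomic M" and fin: "0 < emeasure M (space M)" "emeasure M (space M) < \<infinity>"
    and phi: "orlicz_function \<phi>" and p: "0 < p" and ue: "upper_p_estimate M \<phi> p"
  shows "delta_star Large_Args p \<phi>"
proof -
  obtain C where C: "0 < C" and UE: "upper_p_estimate_with M \<phi> p C"
    using ue by (auto simp: upper_p_estimate_iff_with)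
  define T where "T = measure M (space M)"
  have "0 < T" using fin by (simp add: T_def emeasure_eq_ennreal_measure less_top)
  obtain v where v: "0 < v" "2 / T \<le> \<phi> v" by (rule orlicz_function_large[OF phi])
  have "1 / (2 * C powr p) * a powr p * \<phi> u \<le> \<phi> (a * u)" if a: "1 \<le> a" and u: "v \<le> u" for a u
  proof (rule nonatomic_upper_p_estimate_growth[OF na phi p C UE a _ sets.top fin(2)])
    have "0 < \<phi> v" using orlicz_function_pos[OF phi v(1)] .
    moreover have "\<phi> v \<le> \<phi> u" using orlicz_function_mono[OF phi _ u] v(1) by simp
    ultimately have "2 / \<phi> u \<le> 2 / \<phi> v" by (simp add: frac_le)
    also have "\<dots> \<le> T" using v \<open>0 < T\<close> \<open>0 < \<phi> v\<close> by (simp add: field_simps)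
    finally show "2 / \<phi> u \<le> measure M (space M)" by (simp add: T_def)
  qed (use u v in auto)
  then show ?thesis
    unfolding delta_star.simps using C v(1) by (intro exI[of _ "1 / (2 * C powr p)"] conjI exI[of _ v]) auto
qed

lemma count_space_upper_p_estimate_growth:
  fixes M :: "'a measure" and g :: "nat \<Rightarrow> 'a"
  assumes cM: "M = count_space (space M)" and g: "bij_betw g UNIV (space M)"
    and phi: "orlicz_function \<phi>" and p: "0 < p" and C: "0 < C"
    and UE: "upper_p_estimate_with M \<phi> p C" and a: "1 \<le> a" and u: "0 < u"
    and small: "\<phi> (a * u) \<le> 1 / 2"
  shows "1 / (3 * C powr p) * a powr p * \<phi> u \<le> \<phi> (a * u)"
proof -
  define w1 where "w1 = \<phi> u"
  define w2 where "w2 = \<phi> (a * u)"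
  have w1: "0 < w1" using orlicz_function_pos[OF phi u] by (simp add: w1_def)
  have w12: "w1 \<le> w2"
    unfolding w1_def w2_def using a u by (intro orlicz_function_mono[OF phi]) auto
  have w2: "w2 \<le> 1 / 2" using small by (simp add: w2_def)
  \<comment> \<open>blocks of \<open>m \<approx> 1 / w2\<close> points, \<open>n \<approx> 1 / (m w1)\<close> of them\<close>
  define m where "m = nat \<lfloor>1 / w2\<rfloor>"
  have "real m = of_int \<lfloor>1 / w2\<rfloor>" using w1 w12 by (simp add: m_def)
  then have m_floor: "m \<le> 1 / w2" "1 / w2 - 1 < m" by linarith+
  have "2 \<le> 1 / w2" using w1 w12 w2 by (simp add: field_simps)
  moreover have "1 / (2 * w2) = (1 / w2) / 2" by simp
  ultimately have m: "m * w2 \<le> 1" "1 / (2 * w2) \<le> m" "1 \<le> m"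
    using m_floor w1 w12 by (simp_all add: field_simps, linarith+)
  define n where "n = nat \<lfloor>1 / (m * w1)\<rfloor> + 1"
  have "real n = of_int \<lfloor>1 / (m * w1)\<rfloor> + 1" using w1 m(3) by (simp add: n_def)
  then have n: "1 / (m * w1) < n" "n \<le> 1 / (m * w1) + 1" by linarith+
  have "n * w1 \<le> (1 / (m * w1) + 1) * w1"
    using n(2) w1 by (intro mult_right_mono) auto
  also have "\<dots> = 1 / m + w1" using w1 m(3) by (simp add: field_simps)
  also have "\<dots> \<le> 3 * w2"
  proof -
    have "1 / m \<le> 2 * w2" using m(2,3) w1 w12 by (simp add: field_simps)
    then show ?thesis using w12 by linarith
  qed
  finally have "n * w1 \<le> 3 * w2" .
  obtain A where A: "\<forall>i<n. A i \<in> sets M \<and> emeasure M (A i) = ennreal m" "disjoint_family_on A {..<n}"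
    using count_space_disjoint_family[OF cM g] by blast
  show ?thesis
  proof (rule upper_p_estimate_growth[where s = m and c = 3, OF phi p C UE _ _ A(2) _ _ _ a u])
    show "1 < real n * real m * \<phi> u" using n(1) w1 m(3) by (simp add: w1_def field_simps)
  qed (use A m \<open>n * w1 \<le> 3 * w2\<close> in \<open>auto simp: w1_def w2_def\<close>)
qed

lemma upper_p_estimate_imp_delta_star_Small:
  fixes M :: "'a measure" and g :: "nat \<Rightarrow> 'a"
  assumes cM: "M = count_space (space M)" and g: "bij_betw g UNIV (space M)"
    and phi: "orlicz_function \<phi>" and p: "0 < p" and ue: "upper_p_estimate M \<phi> p"
  shows "delta_star Small_Args p \<phi>"
proof -
  obtain C where C: "0 < C" and UE: "upper_p_estimate_with M \<phi> p C"
    using ue by (auto simp: upper_p_estimate_iff_with)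
  obtain v where v: "0 < v" "\<phi> v \<le> 1 / 2" by (rule orlicz_function_small[OF phi, of "1 / 2"]) auto
  have growth: "1 / (3 * C powr p) * a powr p * \<phi> u \<le> \<phi> (a * u)"
    if a: "1 \<le> a" and u: "0 < u" and auv: "a * u \<le> v" for a u
    using orlicz_function_mono[OF phi _ auv] a u v
    by (intro count_space_upper_p_estimate_growth[OF cM g phi p C UE a u]) auto
  have "1 / (3 * C powr p) * a powr p * \<phi> u \<le> \<phi> (a * u)"
    if "1 \<le> a" "0 \<le> u" "a * u \<le> v" for a u
    using growth[OF that(1) _ that(3)] that(2) orlicz_function_zero[OF phi]
    by (cases "u = 0") auto
  then show ?thesis
    unfolding delta_star.simps using C v(1) by (intro exI[of _ "1 / (3 * C powr p)"] conjI exI[of _ v]) auto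
qed

lemma upper_p_estimate_imp_delta_star:
  assumes "sigma_finite_measure M" "measure_regime M r" "orlicz_function \<phi>" "0 < p"
    "upper_p_estimate M \<phi> p"
  shows "delta_star r p \<phi>"
  using assms upper_p_estimate_imp_delta_star_All upper_p_estimate_imp_delta_star_Large
    upper_p_estimate_imp_delta_star_Small
  by (cases r) auto

section \<open>\<open>\<Delta>\<^sup>*\<^sup>p\<close> implies \<open>p\<close>-convexity\<close>

lemma weighted_mean_half_bound:
  fixes \<psi> :: "real \<Rightarrow> real" and l y :: "'i \<Rightarrow> real" and I :: "'i set"
  defines "m \<equiv> (\<Sum>i\<in>I. l i * y i)"
  assumes I: "finite I" and l: "\<And>i. i \<in> I \<Longrightarrow> 0 \<le> l i" "(\<Sum>i\<in>I. l i) = 1"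
    and y: "\<And>i. i \<in> I \<Longrightarrow> 0 \<le> y i" and K: "0 < K"
    and \<psi>: "\<psi> 0 = 0" "\<And>t. 0 \<le> t \<Longrightarrow> 0 \<le> \<psi> t"
    and growth: "\<And>i. i \<in> I \<Longrightarrow> 0 < m \<Longrightarrow> m / 2 \<le> y i \<Longrightarrow> K * (y i / (m / 2)) * \<psi> (m / 2) \<le> \<psi> (y i)"
  shows "K * \<psi> (m / 2) \<le> (\<Sum>i\<in>I. l i * \<psi> (y i))"
proof (cases "m = 0")
  case True
  then show ?thesis using l y \<psi> by (simp add: sum_nonneg)
next
  case False
  then have m: "0 < m" using l y by (simp add: m_def sum_nonneg order_less_le)
  \<comment> \<open>the indices with \<open>y i \<ge> m / 2\<close> carry at least half of the mean\<close>
  define S where "S = {i\<in>I. m / 2 \<le> y i}"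
  have S: "S \<subseteq> I" "finite S" using I by (auto simp: S_def)
  have "(\<Sum>i\<in>I - S. l i * y i) \<le> (\<Sum>i\<in>I - S. l i * (m / 2))"
    using l by (intro sum_mono mult_left_mono) (auto simp: S_def)
  also have "\<dots> = (\<Sum>i\<in>I - S. l i) * (m / 2)"
    by (simp add: sum_distrib_right)
  also have "\<dots> \<le> (\<Sum>i\<in>I. l i) * (m / 2)"
    using l I m by (intro mult_right_mono sum_mono2) auto
  finally have "(\<Sum>i\<in>I - S. l i * y i) \<le> m / 2" using l(2) by simp
  moreover have "m = (\<Sum>i\<in>S. l i * y i) + (\<Sum>i\<in>I - S. l i * y i)"
    unfolding m_def using S I by (metis sum.subset_diff add.commute)
  ultimately have S_mean: "m / 2 \<le> (\<Sum>i\<in>S. l i * y i)" by linarith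
  have "K * \<psi> (m / 2) = (K * \<psi> (m / 2) / (m / 2)) * (m / 2)" using m by simp
  also have "\<dots> \<le> (K * \<psi> (m / 2) / (m / 2)) * (\<Sum>i\<in>S. l i * y i)"
    using S_mean K \<psi>(2)[of "m / 2"] m by (intro mult_left_mono) auto
  also have "\<dots> = (\<Sum>i\<in>S. l i * (K * (y i / (m / 2)) * \<psi> (m / 2)))"
    by (simp add: sum_distrib_left sum_divide_distrib field_simps)
  also have "\<dots> \<le> (\<Sum>i\<in>S. l i * \<psi> (y i))"
    using growth m l S by (intro sum_mono mult_left_mono) (auto simp: S_def)
  also have "\<dots> \<le> (\<Sum>i\<in>I. l i * \<psi> (y i))"
    using S I l \<psi> y by (intro sum_mono2) auto
  finally show ?thesis .
qed

lemma powr_powr_inverse: "0 < p \<Longrightarrow> 0 \<le> z \<Longrightarrow> (z powr p) powr (1 / p) = (z::real)"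
  by (cases "z = 0") (auto simp: powr_powr)

lemma orlicz_power_mean_bound:
  fixes \<phi> :: "real \<Rightarrow> real" and l z :: "nat \<Rightarrow> real" and n :: nat and p :: real
  defines "u \<equiv> ((\<Sum>i<n. l i * z i powr p) / 2) powr (1 / p)"
  assumes phi: "orlicz_function \<phi>" and p: "0 < p" and K: "0 < K"
    and l: "\<And>i. i < n \<Longrightarrow> 0 \<le> l i" "(\<Sum>i<n. l i) = 1" and z: "\<And>i. i < n \<Longrightarrow> 0 \<le> z i"
    and growth: "\<And>i a. i < n \<Longrightarrow> 1 \<le> a \<Longrightarrow> a * u = z i \<Longrightarrow> K * a powr p * \<phi> u \<le> \<phi> (z i)"
  shows "K * \<phi> u \<le> (\<Sum>i<n. l i * \<phi> (z i))"
proof -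
  define m where "m = (\<Sum>i<n. l i * z i powr p)"
  have "K * (\<lambda>t. \<phi> (t powr (1 / p))) (m / 2) \<le> (\<Sum>i<n. l i * (\<lambda>t. \<phi> (t powr (1 / p))) (z i powr p))"
    unfolding m_def
  proof (rule weighted_mean_half_bound[OF _ _ l(2) _ K])
    fix i assume i: "i \<in> {..<n}" and "0 < (\<Sum>i<n. l i * z i powr p)"
      and zi: "(\<Sum>i<n. l i * z i powr p) / 2 \<le> z i powr p"
    then have m: "0 < m / 2" "m / 2 \<le> z i powr p" by (simp_all add: m_def)
    have "u \<le> (z i powr p) powr (1 / p)"
      unfolding u_def m_def[symmetric] using m p by (intro powr_mono2) auto
    then have uz: "u \<le> z i" using powr_powr_inverse[OF p z] i by simp
    have u: "0 < u" using m by (simp add: u_def m_def)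
    have up: "u powr p = m / 2" using m p by (simp add: u_def m_def powr_powr)
    have "(z i / u) powr p = z i powr p / u powr p" using u z[of i] i by (simp add: powr_divide)
    then have "(z i / u) powr p = z i powr p / (m / 2)" unfolding up .
    moreover have "K * (z i / u) powr p * \<phi> u \<le> \<phi> (z i)"
      using growth[of i "z i / u"] i uz u by simp
    ultimately show "K * (z i powr p / ((\<Sum>i<n. l i * z i powr p) / 2)) * \<phi> (((\<Sum>i<n. l i * z i powr p) / 2) powr (1 / p))
        \<le> \<phi> ((z i powr p) powr (1 / p))"
      using powr_powr_inverse[OF p z] i by (simp add: u_def m_def)
  qed (use l orlicz_function_zero[OF phi] orlicz_function_nonneg[OF phi] in auto)
  then show ?thesis using powr_powr_inverse[OF p z] by (simp add: u_def m_def)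
qed

lemma orlicz_shrink_bound:
  fixes \<phi> :: "real \<Rightarrow> real"
  assumes p: "0 < p" and K: "0 < K" "K \<le> 1" and t: "0 \<le> t"
    and growth: "\<And>a u. 1 \<le> a \<Longrightarrow> 0 \<le> u \<Longrightarrow> a * u = t powr (1 / p) \<Longrightarrow> K * a powr p * \<phi> u \<le> \<phi> (a * u)"
  shows "\<phi> ((K^2 * t) powr (1 / p)) \<le> K * \<phi> (t powr (1 / p))"
proof -
  define a where "a = (1 / K^2) powr (1 / p)"
  define u where "u = (K^2 * t) powr (1 / p)"
  have "1 \<le> 1 / K^2" using K by (simp add: power_le_one)
  then have a: "1 \<le> a" using p by (simp add: a_def ge_one_powr_ge_zero)
  have au: "a * u = t powr (1 / p)" using K t by (simp add: a_def u_def powr_mult[symmetric])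
  have "a powr p = 1 / K^2" using K p by (simp add: a_def powr_powr)
  then have "K * (1 / K^2) * \<phi> u \<le> \<phi> (t powr (1 / p))"
    using growth[OF a _ au] au by (simp add: u_def)
  then show ?thesis using K by (simp add: u_def power2_eq_square field_simps)
qed

lemma orlicz_power_mean_bound_below:
  fixes \<phi> :: "real \<Rightarrow> real" and l z :: "nat \<Rightarrow> real"
  assumes phi: "orlicz_function \<phi>" and p: "0 < p" and K: "0 < K" "K \<le> 1"
    and growth: "\<And>a u. 1 \<le> a \<Longrightarrow> 0 \<le> u \<Longrightarrow> a * u \<le> B \<Longrightarrow> K * a powr p * \<phi> u \<le> \<phi> (a * u)"
    and l: "\<And>i. i < n \<Longrightarrow> 0 \<le> l i" "(\<Sum>i<n. l i) = 1"
    and z: "\<And>i. i < n \<Longrightarrow> 0 \<le> z i" "\<And>i. i < n \<Longrightarrow> z i \<le> B"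
  shows "\<phi> ((K^2 / 2) powr (1 / p) * (\<Sum>i<n. l i * z i powr p) powr (1 / p)) \<le> (\<Sum>i<n. l i * \<phi> (z i))"
proof -
  define m where "m = (\<Sum>i<n. l i * z i powr p)"
  have m: "0 \<le> m" unfolding m_def using l by (intro sum_nonneg) auto
  have "n \<noteq> 0"
  proof
    assume "n = 0"
    with l(2) show False by simp
  qed
  then have "0 \<le> B" using z[of 0] by linarith
  have "m \<le> (\<Sum>i<n. l i * B powr p)"
    unfolding m_def using l z p by (intro sum_mono mult_left_mono powr_mono2) auto
  also have "\<dots> = B powr p" using l(2) by (simp add: sum_distrib_right[symmetric])
  finally have bound: "(m / 2) powr (1 / p) \<le> B"
    using powr_mono2[of "1 / p" "m / 2" "B powr p"] powr_powr_inverse[OF p \<open>0 \<le> B\<close>] m p by simp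
  have "\<phi> ((K^2 * (m / 2)) powr (1 / p)) \<le> K * \<phi> ((m / 2) powr (1 / p))"
  proof (rule orlicz_shrink_bound[OF p K])
    fix a u assume "1 \<le> a" "0 \<le> u" and eq: "a * u = (m / 2) powr (1 / p)"
    then show "K * a powr p * \<phi> u \<le> \<phi> (a * u)" by (intro growth) (use bound eq in auto)
  qed (use m in simp)
  also have "\<dots> \<le> (\<Sum>i<n. l i * \<phi> (z i))"
    unfolding m_def
  proof (rule orlicz_power_mean_bound[OF phi p K(1) l z(1)])
    fix i a assume i: "i < n" and a: "1 \<le> a"
      and eq: "a * ((\<Sum>i<n. l i * z i powr p) / 2) powr (1 / p) = z i"
    show "K * a powr p * \<phi> (((\<Sum>i<n. l i * z i powr p) / 2) powr (1 / p)) \<le> \<phi> (z i)"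
      using growth[OF a, of "((\<Sum>i<n. l i * z i powr p) / 2) powr (1 / p)"] eq z(2)[OF i] by simp
  qed
  finally show ?thesis using m by (simp add: m_def powr_mult[symmetric])
qed

lemma orlicz_power_mean_bound_above:
  fixes \<phi> :: "real \<Rightarrow> real" and l z :: "nat \<Rightarrow> real"
  assumes phi: "orlicz_function \<phi>" and p: "0 < p" and K: "0 < K" and v: "0 \<le> v"
    and growth: "\<And>a u. 1 \<le> a \<Longrightarrow> v \<le> u \<Longrightarrow> K * a powr p * \<phi> u \<le> \<phi> (a * u)"
    and l: "\<And>i. i < n \<Longrightarrow> 0 \<le> l i" "(\<Sum>i<n. l i) = 1" and z: "\<And>i. i < n \<Longrightarrow> 0 \<le> z i"
  shows "\<phi> (((\<Sum>i<n. l i * z i powr p) / 2) powr (1 / p)) \<le> (\<Sum>i<n. l i * \<phi> (z i)) / K + \<phi> v"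
proof -
  define u where "u = ((\<Sum>i<n. l i * z i powr p) / 2) powr (1 / p)"
  have S: "0 \<le> (\<Sum>i<n. l i * \<phi> (z i))"
    using l z orlicz_function_nonneg[OF phi] by (intro sum_nonneg) auto
  show ?thesis
  proof (cases "v \<le> u")
    case True
    have "K * \<phi> u \<le> (\<Sum>i<n. l i * \<phi> (z i))"
      unfolding u_def
    proof (rule orlicz_power_mean_bound[OF phi p K l z])
      fix i a assume a: "1 \<le> a" and eq: "a * ((\<Sum>i<n. l i * z i powr p) / 2) powr (1 / p) = z i"
      show "K * a powr p * \<phi> (((\<Sum>i<n. l i * z i powr p) / 2) powr (1 / p)) \<le> \<phi> (z i)"
        using growth[OF a True] eq by (simp add: u_def)
    qed
    then have "\<phi> u \<le> (\<Sum>i<n. l i * \<phi> (z i)) / K" using K by (simp add: field_simps)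
    then show ?thesis using orlicz_function_nonneg[OF phi v] by (simp add: u_def)
  next
    case False
    then have "\<phi> u \<le> \<phi> v" by (intro orlicz_function_mono[OF phi]) (auto simp: u_def)
    then show ?thesis using divide_nonneg_pos[OF S K] by (simp add: u_def)
  qed
qed

lemma orlicz_rescale_bound:
  fixes \<phi> :: "real \<Rightarrow> real"
  assumes phi: "orlicz_function \<phi>" and K: "0 < K" and v: "0 \<le> v"
    and growth: "\<And>a u. 1 \<le> a \<Longrightarrow> v \<le> u \<Longrightarrow> K * a powr p * \<phi> u \<le> \<phi> (a * u)"
    and s: "1 \<le> s" and t: "1 \<le> t" and x: "0 \<le> x"
  shows "\<phi> (x / (s * t)) \<le> \<phi> x / (K * s powr p) + \<phi> (v / t)"
proof -
  have Ks: "0 < K * s powr p" using K s by simp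
  have "x / (s * t) \<le> x / s" using s t x by (simp add: divide_left_mono)
  then have le: "\<phi> (x / (s * t)) \<le> \<phi> (x / s)" using s t x by (intro orlicz_function_mono[OF phi]) auto
  show ?thesis
  proof (cases "v \<le> x / s")
    case True
    have "K * s powr p * \<phi> (x / s) \<le> \<phi> x" using growth[OF s True] s by simp
    then have "\<phi> (x / s) \<le> \<phi> x / (K * s powr p)" using Ks by (simp add: field_simps)
    then show ?thesis using le orlicz_function_nonneg[OF phi, of "v / t"] v t by simp
  next
    case False
    then have "x / (s * t) \<le> v / t" using t by (simp add: divide_right_mono flip: divide_divide_eq_left)
    then have "\<phi> (x / (s * t)) \<le> \<phi> (v / t)" using s t x by (intro orlicz_function_mono[OF phi]) auto
    then show ?thesis using divide_nonneg_pos[OF orlicz_function_nonneg[OF phi x] Ks] by linarith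
  qed
qed

lemma orlicz_power_mean_bound_rescaled:
  fixes \<phi> :: "real \<Rightarrow> real" and l z :: "nat \<Rightarrow> real"
  assumes phi: "orlicz_function \<phi>" and p: "0 < p" and K: "0 < K" and v: "0 \<le> v"
    and growth: "\<And>a u. 1 \<le> a \<Longrightarrow> v \<le> u \<Longrightarrow> K * a powr p * \<phi> u \<le> \<phi> (a * u)"
    and l: "\<And>i. i < n \<Longrightarrow> 0 \<le> l i" "(\<Sum>i<n. l i) = 1" and z: "\<And>i. i < n \<Longrightarrow> 0 \<le> z i"
    and s: "1 \<le> s" and t: "1 \<le> t"
  shows "\<phi> ((\<Sum>i<n. l i * z i powr p) powr (1 / p) / (2 powr (1 / p) * s * t))
    \<le> (\<Sum>i<n. l i * \<phi> (z i)) / (K^2 * s powr p) + (\<phi> v / (K * s powr p) + \<phi> (v / t))"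
proof -
  define m where "m = (\<Sum>i<n. l i * z i powr p)"
  define S where "S = (\<Sum>i<n. l i * \<phi> (z i))"
  have "0 \<le> m" unfolding m_def using l by (intro sum_nonneg) auto
  then have "\<phi> (m powr (1 / p) / (2 powr (1 / p) * s * t)) = \<phi> ((m / 2) powr (1 / p) / (s * t))"
    by (simp add: powr_divide mult.assoc)
  also have "\<dots> \<le> \<phi> ((m / 2) powr (1 / p)) / (K * s powr p) + \<phi> (v / t)"
    using growth by (intro orlicz_rescale_bound[OF phi K v _ s t]) auto
  also have "\<dots> \<le> (S / K + \<phi> v) / (K * s powr p) + \<phi> (v / t)"
    unfolding m_def S_def using z K s
    by (intro add_right_mono divide_right_mono orlicz_power_mean_bound_above[OF phi p K v growth l]) auto
  also have "\<dots> = S / (K^2 * s powr p) + (\<phi> v / (K * s powr p) + \<phi> (v / t))"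
    using K s by (simp add: field_simps power2_eq_square)
  finally show ?thesis by (simp add: m_def S_def)
qed

lemma nn_integral_weighted_sum_le:
  fixes g :: "nat \<Rightarrow> 'a \<Rightarrow> real" and l :: "nat \<Rightarrow> real" and G :: "'a \<Rightarrow> real"
  assumes g: "\<And>i. i < n \<Longrightarrow> g i \<in> borel_measurable M" "\<And>i x. i < n \<Longrightarrow> 0 \<le> g i x"
      "\<And>i. i < n \<Longrightarrow> (\<integral>\<^sup>+ x. ennreal (g i x) \<partial>M) \<le> 1"
    and l: "\<And>i. i < n \<Longrightarrow> 0 \<le> l i" "(\<Sum>i<n. l i) = 1" and \<alpha>: "0 \<le> \<alpha>" and \<beta>: "0 \<le> \<beta>"
    and G: "\<And>x. x \<in> space M \<Longrightarrow> G x \<le> \<alpha> * (\<Sum>i<n. l i * g i x) + \<beta>"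
  shows "(\<integral>\<^sup>+ x. ennreal (G x) \<partial>M) \<le> ennreal \<alpha> + ennreal \<beta> * emeasure M (space M)"
proof -
  define h where "h x = (\<Sum>i<n. ennreal (l i) * ennreal (g i x))" for x
  have h_meas: "h \<in> borel_measurable M" unfolding h_def using g(1) by measurable
  have "(\<integral>\<^sup>+ x. ennreal (G x) \<partial>M) \<le> (\<integral>\<^sup>+ x. ennreal \<alpha> * h x + ennreal \<beta> \<partial>M)"
  proof (rule nn_integral_mono)
    fix x assume x: "x \<in> space M"
    have "(\<Sum>i<n. ennreal (l i) * ennreal (g i x)) = (\<Sum>i<n. ennreal (l i * g i x))"
      using l g by (intro sum.cong refl) (simp add: ennreal_mult)
    also have "\<dots> = ennreal (\<Sum>i<n. l i * g i x)"
      using l g by (intro sum_ennreal) auto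
    finally have "(\<Sum>i<n. ennreal (l i) * ennreal (g i x)) = ennreal (\<Sum>i<n. l i * g i x)" .
    moreover have "0 \<le> (\<Sum>i<n. l i * g i x)" using l g by (intro sum_nonneg) auto
    ultimately have "ennreal (\<alpha> * (\<Sum>i<n. l i * g i x) + \<beta>) = ennreal \<alpha> * h x + ennreal \<beta>"
      using \<alpha> \<beta> by (simp add: h_def ennreal_plus ennreal_mult)
    then show "ennreal (G x) \<le> ennreal \<alpha> * h x + ennreal \<beta>"
      using ennreal_leI[OF G[OF x]] by simp
  qed
  also have "\<dots> = ennreal \<alpha> * (\<integral>\<^sup>+ x. h x \<partial>M) + ennreal \<beta> * emeasure M (space M)"
    using h_meas by (simp add: nn_integral_add nn_integral_cmult)
  also have "\<dots> \<le> ennreal \<alpha> * 1 + ennreal \<beta> * emeasure M (space M)"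
  proof -
    have "(\<integral>\<^sup>+ x. h x \<partial>M) = (\<Sum>i<n. \<integral>\<^sup>+ x. ennreal (l i) * ennreal (g i x) \<partial>M)"
      unfolding h_def using g(1) by (intro nn_integral_sum) auto
    also have "\<dots> = (\<Sum>i<n. ennreal (l i) * (\<integral>\<^sup>+ x. ennreal (g i x) \<partial>M))"
      using g(1) by (intro sum.cong refl nn_integral_cmult) auto
    also have "\<dots> \<le> (\<Sum>i<n. ennreal (l i))"
      using g(3) by (intro sum_mono) (simp add: mult_left_le)
    also have "\<dots> = 1" using l sum_ennreal[of "{..<n}" l] by simp
    finally show ?thesis by (intro add_mono mult_left_mono) auto
  qed
  finally show ?thesis by simp
qed

lemma powr_sum_div_eq_weighted_mean:
  fixes y \<epsilon> :: "nat \<Rightarrow> real"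
  assumes "\<And>i. i < n \<Longrightarrow> 0 < \<epsilon> i" "\<And>i. i < n \<Longrightarrow> 0 \<le> y i"
  shows "(\<Sum>i<n. y i powr p) powr (1 / p) / (\<Sum>i<n. \<epsilon> i powr p) powr (1 / p)
    = (\<Sum>i<n. (\<epsilon> i powr p / (\<Sum>j<n. \<epsilon> j powr p)) * (y i / \<epsilon> i) powr p) powr (1 / p)"
proof -
  define E where "E = (\<Sum>i<n. \<epsilon> i powr p)"
  have "(\<epsilon> i powr p / E) * (y i / \<epsilon> i) powr p = y i powr p / E" if "i < n" for i
    using assms(1,2)[OF that] by (simp add: powr_divide)
  then have "(\<Sum>i<n. (\<epsilon> i powr p / E) * (y i / \<epsilon> i) powr p) = (\<Sum>i<n. y i powr p / E)"
    by (intro sum.cong) auto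
  also have "\<dots> = (\<Sum>i<n. y i powr p) / E" by (simp add: sum_divide_distrib)
  finally show ?thesis using assms by (simp add: E_def powr_divide sum_nonneg)
qed

(* p-convexity with constant 1 / c, read off from admissible Luxemburg scalings *)
definition luxemburg_p_convex :: "'a measure \<Rightarrow> (real \<Rightarrow> real) \<Rightarrow> real \<Rightarrow> real \<Rightarrow> bool" where
  "luxemburg_p_convex M \<phi> p c \<longleftrightarrow> (\<forall>n (f :: nat \<Rightarrow> 'a \<Rightarrow> real) \<epsilon>. 0 < n \<longrightarrow>
     (\<forall>i<n. f i \<in> orlicz_space M \<phi> \<and> \<epsilon> i \<in> luxemburg_set M \<phi> (f i)) \<longrightarrow>
     (\<Sum>i<n. \<epsilon> i powr p) powr (1 / p) / c
       \<in> luxemburg_set M \<phi> (\<lambda>x. (\<Sum>i<n. \<bar>f i x\<bar> powr p) powr (1 / p)))"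

(* Z may record a priori bounds on the normalised values |f x| / \<epsilon>, as on \<nat> *)
lemma luxemburg_p_convexI:
  fixes M :: "'a measure" and Z :: "real set"
  assumes phi: "orlicz_function \<phi>" and p: "0 < p" and c: "0 < c" and \<alpha>: "0 \<le> \<alpha>" and \<beta>: "0 \<le> \<beta>"
    and total: "ennreal \<alpha> + ennreal \<beta> * emeasure M (space M) \<le> 1"
    and range: "\<And>f \<epsilon> x. f \<in> orlicz_space M \<phi> \<Longrightarrow> \<epsilon> \<in> luxemburg_set M \<phi> f \<Longrightarrow> x \<in> space M \<Longrightarrow>
      \<bar>f x\<bar> / \<epsilon> \<in> Z"
    and pointwise: "\<And>(n :: nat) l z. (\<And>i. i < n \<Longrightarrow> 0 \<le> l i) \<Longrightarrow> (\<Sum>i<n. l i) = 1 \<Longrightarrow>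
      (\<And>i. i < n \<Longrightarrow> 0 \<le> z i \<and> z i \<in> Z) \<Longrightarrow>
      \<phi> (c * (\<Sum>i<n. l i * z i powr p) powr (1 / p)) \<le> \<alpha> * (\<Sum>i<n. l i * \<phi> (z i)) + \<beta>"
  shows "luxemburg_p_convex M \<phi> p c"
  unfolding luxemburg_p_convex_def
proof (intro allI impI)
  fix n and f :: "nat \<Rightarrow> 'a \<Rightarrow> real" and \<epsilon> :: "nat \<Rightarrow> real"
  assume n: "0 < n" and f: "\<forall>i<n. f i \<in> orlicz_space M \<phi> \<and> \<epsilon> i \<in> luxemburg_set M \<phi> (f i)"
  define E where "E = (\<Sum>i<n. \<epsilon> i powr p)"
  define l where "l i = \<epsilon> i powr p / E" for i
  define F where "F x = (\<Sum>i<n. \<bar>f i x\<bar> powr p) powr (1 / p)" for x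
  have \<epsilon>: "0 < \<epsilon> i" if "i < n" for i using f that by (simp add: luxemburg_set_def)
  have "0 < \<epsilon> i powr p" if "i < n" for i using \<epsilon>[OF that] by simp
  then have E: "0 < E" unfolding E_def using n by (intro sum_pos) auto
  have l: "\<And>i. i < n \<Longrightarrow> 0 \<le> l i" "(\<Sum>i<n. l i) = 1"
    using E by (auto simp: l_def E_def simp flip: sum_divide_distrib)
  have "(\<integral>\<^sup>+ x. ennreal (\<phi> (\<bar>F x\<bar> / (E powr (1 / p) / c))) \<partial>M)
      \<le> ennreal \<alpha> + ennreal \<beta> * emeasure M (space M)"
  proof (rule nn_integral_weighted_sum_le[OF _ _ _ l \<alpha> \<beta>])
    fix i assume i: "i < n"
    have "(\<lambda>x. \<phi> \<bar>f i x / \<epsilon> i\<bar>) \<in> borel_measurable M"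
      using f i by (intro borel_measurable_orlicz_abs[OF phi]) (auto simp: orlicz_space_def)
    then show "(\<lambda>x. \<phi> (\<bar>f i x\<bar> / \<epsilon> i)) \<in> borel_measurable M" using \<epsilon>[OF i] by simp
    show "0 \<le> \<phi> (\<bar>f i x\<bar> / \<epsilon> i)" for x using \<epsilon>[OF i] orlicz_function_nonneg[OF phi] by simp
    show "(\<integral>\<^sup>+ x. ennreal (\<phi> (\<bar>f i x\<bar> / \<epsilon> i)) \<partial>M) \<le> 1" using f i by (simp add: luxemburg_set_def)
  next
    fix x assume x: "x \<in> space M"
    have "F x / E powr (1 / p) = (\<Sum>i<n. l i * (\<bar>f i x\<bar> / \<epsilon> i) powr p) powr (1 / p)"
      using powr_sum_div_eq_weighted_mean[of n \<epsilon> "\<lambda>i. \<bar>f i x\<bar>" p] \<epsilon> by (simp add: F_def E_def l_def)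
    moreover have "\<bar>F x\<bar> / (E powr (1 / p) / c) = c * (F x / E powr (1 / p))"
      by (simp add: F_def)
    ultimately have "\<bar>F x\<bar> / (E powr (1 / p) / c) = c * (\<Sum>i<n. l i * (\<bar>f i x\<bar> / \<epsilon> i) powr p) powr (1 / p)"
      by simp
    also have "\<phi> \<dots> \<le> \<alpha> * (\<Sum>i<n. l i * \<phi> (\<bar>f i x\<bar> / \<epsilon> i)) + \<beta>"
    proof (intro pointwise l)
      fix i assume "i < n"
      then show "0 \<le> \<bar>f i x\<bar> / \<epsilon> i \<and> \<bar>f i x\<bar> / \<epsilon> i \<in> Z"
        using range f x \<epsilon>[of i] by simp
    qed
    finally show "\<phi> (\<bar>F x\<bar> / (E powr (1 / p) / c)) \<le> \<alpha> * (\<Sum>i<n. l i * \<phi> (\<bar>f i x\<bar> / \<epsilon> i)) + \<beta>" .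
  qed
  then show "E powr (1 / p) / c \<in> luxemburg_set M \<phi> (\<lambda>x. (\<Sum>i<n. \<bar>f i x\<bar> powr p) powr (1 / p))"
    using total E c by (auto simp: luxemburg_set_def F_def[abs_def] E_def)
qed

lemma tendsto_powr_sum_shift:
  fixes N :: "nat \<Rightarrow> real"
  assumes p: "0 < p" and N: "\<And>i. i < n \<Longrightarrow> 0 \<le> N i"
  shows "((\<lambda>d. (\<Sum>i<n. (N i + d) powr p) powr (1 / p)) \<longlongrightarrow> (\<Sum>i<n. N i powr p) powr (1 / p)) (at_right 0)"
proof -
  have pos: "\<forall>\<^sub>F d in at_right (0::real). 0 < d" by (rule eventually_at_right_less)
  have "((\<lambda>d. (N i + d) powr p) \<longlongrightarrow> (N i + 0) powr p) (at_right 0)" if "i < n" for i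
    using p N[OF that] by (intro tendsto_powr' tendsto_intros) (auto intro: eventually_mono[OF pos])
  then have "((\<lambda>d. \<Sum>i<n. (N i + d) powr p) \<longlongrightarrow> (\<Sum>i<n. N i powr p)) (at_right 0)"
    by (auto intro!: tendsto_sum)
  then show ?thesis
    using p by (intro tendsto_powr' tendsto_const) (auto intro!: always_eventually sum_nonneg)
qed

lemma p_convex_if_luxemburg_p_convex:
  fixes M :: "'a measure"
  assumes phi: "orlicz_function \<phi>" and p: "0 < p" and c: "0 < c" and lux: "luxemburg_p_convex M \<phi> p c"
  shows "p_convex M \<phi> p"
  unfolding p_convex_def
proof (intro exI[of _ "1 / c"] conjI allI impI)
  fix n and f :: "nat \<Rightarrow> 'a \<Rightarrow> real"
  assume f: "\<forall>i<n. f i \<in> orlicz_space M \<phi>"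
  define F where "F x = (\<Sum>i<n. \<bar>f i x\<bar> powr p) powr (1 / p)" for x
  define N where "N i = orlicz_norm M \<phi> (f i)" for i
  have N: "0 \<le> N i" if "i < n" for i using f that by (simp add: N_def orlicz_norm_nonneg[OF phi])
  show "orlicz_norm M \<phi> (\<lambda>x. (\<Sum>i<n. \<bar>f i x\<bar> powr p) powr (1 / p))
      \<le> 1 / c * (\<Sum>i<n. orlicz_norm M \<phi> (f i) powr p) powr (1 / p)"
  proof (cases "n = 0")
    case True
    then show ?thesis by (simp add: orlicz_norm_zero[OF phi])
  next
    case False
    have "orlicz_norm M \<phi> F \<le> 1 / c * (\<Sum>i<n. (N i + d) powr p) powr (1 / p)" if "0 < d" for d
    proof -
      have "N i + d \<in> luxemburg_set M \<phi> (f i)" if "i < n" for i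
        using f that \<open>0 < d\<close> by (intro luxemburg_set_above_norm[OF phi]) (auto simp: N_def)
      then show ?thesis
        using lux f False unfolding luxemburg_p_convex_def
        by (intro orlicz_norm_le) (simp add: F_def[abs_def])
    qed
    then have "orlicz_norm M \<phi> F \<le> 1 / c * (\<Sum>i<n. N i powr p) powr (1 / p)"
      by (intro tendsto_le[OF _ tendsto_mult_left[OF tendsto_powr_sum_shift[OF p N]] tendsto_const])
        (auto simp: eventually_at_right_less eventually_mono[OF eventually_at_right_less])
    then show ?thesis by (simp add: F_def[abs_def] N_def)
  qed
qed (use c in simp)

lemma growth_ineq_min_one:
  fixes \<phi> :: "real \<Rightarrow> real"
  assumes "K * a powr p * \<phi> u \<le> \<phi> (a * u)" "0 \<le> \<phi> u"
  shows "min K 1 * a powr p * \<phi> u \<le> \<phi> (a * u)"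
proof -
  have "min K 1 * (a powr p * \<phi> u) \<le> K * (a powr p * \<phi> u)"
    using assms(2) by (intro mult_right_mono) auto
  then show ?thesis using assms(1) by (simp add: mult.assoc)
qed

lemma delta_star_imp_p_convex_All:
  fixes M :: "'a measure"
  assumes phi: "orlicz_function \<phi>" and p: "0 < p" and ds: "delta_star All_Args p \<phi>"
  shows "p_convex M \<phi> p"
proof -
  obtain K0 where K0: "0 < K0" "\<And>a u. 1 \<le> a \<Longrightarrow> 0 \<le> u \<Longrightarrow> K0 * a powr p * \<phi> u \<le> \<phi> (a * u)"
    using ds by auto
  define K where "K = min K0 1"
  have K: "0 < K" "K \<le> 1" using K0(1) by (auto simp: K_def)
  have growth: "K * a powr p * \<phi> u \<le> \<phi> (a * u)" if "1 \<le> a" "0 \<le> u" for a u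
    unfolding K_def using K0(2)[OF that] orlicz_function_nonneg[OF phi that(2)] by (rule growth_ineq_min_one)
  have "luxemburg_p_convex M \<phi> p ((K^2 / 2) powr (1 / p))"
  proof (rule luxemburg_p_convexI[OF phi p, where \<alpha> = 1 and \<beta> = 0 and Z = UNIV])
    fix n :: nat and l z :: "nat \<Rightarrow> real"
    assume l: "\<And>i. i < n \<Longrightarrow> 0 \<le> l i" "(\<Sum>i<n. l i) = 1" and z: "\<And>i. i < n \<Longrightarrow> 0 \<le> z i \<and> z i \<in> UNIV"
    have "z i \<le> (\<Sum>i<n. z i)" if "i < n" for i using that z by (intro member_le_sum) auto
    then have "\<phi> ((K^2 / 2) powr (1 / p) * (\<Sum>i<n. l i * z i powr p) powr (1 / p))
        \<le> (\<Sum>i<n. l i * \<phi> (z i))"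
      using growth z by (intro orlicz_power_mean_bound_below[OF phi p K _ l, of "\<Sum>i<n. z i"]) auto
    then show "\<phi> ((K^2 / 2) powr (1 / p) * (\<Sum>i<n. l i * z i powr p) powr (1 / p))
        \<le> 1 * (\<Sum>i<n. l i * \<phi> (z i)) + 0" by simp
  qed (use K in auto)
  then show ?thesis using K by (intro p_convex_if_luxemburg_p_convex[OF phi p]) auto
qed

lemma obtain_powr_ge:
  fixes X :: real
  assumes "0 < p"
  obtains s where "1 \<le> s" "X \<le> s powr p"
proof
  have "X \<le> (max X 1 powr (1 / p)) powr p" using assms by (simp add: powr_powr)
  also have "\<dots> \<le> max 1 (max X 1 powr (1 / p)) powr p" using assms by (intro powr_mono2) auto
  finally show "X \<le> max 1 (max X 1 powr (1 / p)) powr p" .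
qed simp

lemma delta_star_imp_p_convex_Large:
  fixes M :: "'a measure"
  assumes phi: "orlicz_function \<phi>" and p: "0 < p"
    and fin: "0 < emeasure M (space M)" "emeasure M (space M) < \<infinity>" and ds: "delta_star Large_Args p \<phi>"
  shows "p_convex M \<phi> p"
proof -
  obtain K v where K: "0 < K" and v: "0 \<le> v"
    and growth: "\<And>a u. 1 \<le> a \<Longrightarrow> v \<le> u \<Longrightarrow> K * a powr p * \<phi> u \<le> \<phi> (a * u)"
    using ds by auto
  define T where "T = measure M (space M)"
  have eT: "emeasure M (space M) = ennreal T" using fin(2) by (simp add: T_def emeasure_eq_ennreal_measure)
  have T: "0 < T" using fin(1) eT by simp
  have \<phi>v: "0 \<le> \<phi> v" using orlicz_function_nonneg[OF phi v] .
  \<comment> \<open>\<open>s\<close> absorbs the main term and \<open>t\<close> the error \<open>\<phi> v\<close> of the pointwise bound, each into half the modular\<close>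
  obtain s where s: "1 \<le> s" "2 * (1 / K^2 + \<phi> v * T / K) \<le> s powr p"
    by (rule obtain_powr_ge[OF p])
  then have main: "1 / (K^2 * s powr p) + \<phi> v / (K * s powr p) * T \<le> 1 / 2"
    using K by (simp add: field_simps power2_eq_square)
  obtain t where t: "1 \<le> t" "\<phi> (v / t) \<le> 1 / (2 * T)"
    using orlicz_function_small_quotient[OF phi v, of "1 / (2 * T)"] T by auto
  then have error: "\<phi> (v / t) * T \<le> 1 / 2" using T by (simp add: field_simps)
  define \<alpha> where "\<alpha> = 1 / (K^2 * s powr p)"
  define \<beta> where "\<beta> = \<phi> v / (K * s powr p) + \<phi> (v / t)"
  have "luxemburg_p_convex M \<phi> p (1 / (2 powr (1 / p) * s * t))"
  proof (rule luxemburg_p_convexI[OF phi p, where \<alpha> = \<alpha> and \<beta> = \<beta> and Z = UNIV])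
    show "0 \<le> \<alpha>" "0 \<le> \<beta>"
      using K s \<phi>v orlicz_function_nonneg[OF phi, of "v / t"] v t by (auto simp: \<alpha>_def \<beta>_def)
    moreover have "\<beta> * T = \<phi> v / (K * s powr p) * T + \<phi> (v / t) * T"
      by (simp add: \<beta>_def distrib_right)
    then have "\<alpha> + \<beta> * T \<le> 1" using main error unfolding \<alpha>_def by linarith
    ultimately show "ennreal \<alpha> + ennreal \<beta> * emeasure M (space M) \<le> 1"
      using T by (simp add: eT ennreal_mult[symmetric] ennreal_plus[symmetric] del: ennreal_plus)
  next
    fix n :: nat and l z :: "nat \<Rightarrow> real"
    assume l: "\<And>i. i < n \<Longrightarrow> 0 \<le> l i" "(\<Sum>i<n. l i) = 1" and z: "\<And>i. i < n \<Longrightarrow> 0 \<le> z i \<and> z i \<in> UNIV"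
    show "\<phi> (1 / (2 powr (1 / p) * s * t) * (\<Sum>i<n. l i * z i powr p) powr (1 / p))
        \<le> \<alpha> * (\<Sum>i<n. l i * \<phi> (z i)) + \<beta>"
      using orlicz_power_mean_bound_rescaled[OF phi p K v growth l _ s(1) t(1)] z by (simp add: \<alpha>_def \<beta>_def)
  qed (use s t in auto)
  then show ?thesis using s(1) t(1) by (intro p_convex_if_luxemburg_p_convex[OF phi p]) auto
qed

lemma nn_integral_count_space_ge_point:
  fixes g :: "'a \<Rightarrow> ennreal"
  assumes "x \<in> A"
  shows "g x \<le> (\<integral>\<^sup>+ y. g y \<partial>count_space A)"
proof -
  have "emeasure (count_space A) {x} = 1"
    using assms emeasure_count_space_finite[of "{x}" A] by simp
  then have "g x = (\<integral>\<^sup>+ y. g y * indicator {x} y \<partial>count_space A)"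
    using assms by (simp add: nn_integral_indicator_singleton)
  also have "\<dots> \<le> (\<integral>\<^sup>+ y. g y \<partial>count_space A)"
    by (intro nn_integral_mono) (auto simp: indicator_def)
  finally show ?thesis .
qed

lemma count_space_luxemburg_point_bound:
  assumes cM: "M = count_space (space M)" and "\<epsilon> \<in> luxemburg_set M \<phi> f" "x \<in> space M"
  shows "\<phi> (\<bar>f x\<bar> / \<epsilon>) \<le> 1"
proof -
  have "ennreal (\<phi> (\<bar>f x\<bar> / \<epsilon>)) \<le> (\<integral>\<^sup>+ y. ennreal (\<phi> (\<bar>f y\<bar> / \<epsilon>)) \<partial>count_space (space M))"
    by (rule nn_integral_count_space_ge_point[OF assms(3)])
  also have "\<dots> \<le> 1" using assms(2) by (simp add: luxemburg_set_def flip: cM)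
  finally show ?thesis by (simp add: ennreal_le_1)
qed

lemma delta_star_imp_p_convex_Small:
  fixes M :: "'a measure"
  assumes phi: "orlicz_function \<phi>" and p: "0 < p" and cM: "M = count_space (space M)"
    and ds: "delta_star Small_Args p \<phi>"
  shows "p_convex M \<phi> p"
proof -
  obtain K0 v where K0: "0 < K0" and v: "0 < v"
    and growth0: "\<And>a u. 1 \<le> a \<Longrightarrow> 0 \<le> u \<Longrightarrow> a * u \<le> v \<Longrightarrow> K0 * a powr p * \<phi> u \<le> \<phi> (a * u)"
    using ds by auto
  define K where "K = min K0 1"
  have K: "0 < K" "K \<le> 1" using K0 by (auto simp: K_def)
  have growth: "K * a powr p * \<phi> u \<le> \<phi> (a * u)" if "1 \<le> a" "0 \<le> u" "a * u \<le> v" for a u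
    unfolding K_def using growth0[OF that] orlicz_function_nonneg[OF phi that(2)] by (rule growth_ineq_min_one)
  obtain y where y: "0 < y" "2 \<le> \<phi> y" by (rule orlicz_function_large[OF phi])
  define V where "V = max y v"
  have V: "v \<le> V" "2 \<le> \<phi> V"
    using orlicz_function_mono[OF phi, of y V] y by (auto simp: V_def)
  \<comment> \<open>on \<open>\<nat>\<close> the modular bound forces \<open>\<bar>f x\<bar> / \<epsilon> \<le> V\<close>; dividing by \<open>\<sigma>\<close> moves \<open>[0, V]\<close> into \<open>[0, v]\<close>, where \<open>\<Delta>\<^sup>*\<^sup>p\<close> holds\<close>
  define \<sigma> where "\<sigma> = V / v"
  have \<sigma>: "1 \<le> \<sigma>" using V v by (simp add: \<sigma>_def)
  have range: "\<bar>f x\<bar> / \<epsilon> \<in> {0..V}"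
    if "\<epsilon> \<in> luxemburg_set M \<phi> f" "x \<in> space M" for f \<epsilon> x
  proof -
    have "\<phi> (\<bar>f x\<bar> / \<epsilon>) \<le> 1" using count_space_luxemburg_point_bound[OF cM that] .
    then have "\<phi> (\<bar>f x\<bar> / \<epsilon>) < \<phi> V" using V by simp
    then show ?thesis
      using orlicz_function_mono[OF phi, of V "\<bar>f x\<bar> / \<epsilon>"] that(1) V v
      by (force simp: luxemburg_set_def)
  qed
  have "luxemburg_p_convex M \<phi> p ((K^2 / 2) powr (1 / p) / \<sigma>)"
  proof (rule luxemburg_p_convexI[OF phi p, where \<alpha> = 1 and \<beta> = 0 and Z = "{0..V}"])
    fix n :: nat and l z :: "nat \<Rightarrow> real"
    assume l: "\<And>i. i < n \<Longrightarrow> 0 \<le> l i" "(\<Sum>i<n. l i) = 1" and z: "\<And>i. i < n \<Longrightarrow> 0 \<le> z i \<and> z i \<in> {0..V}"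
    have z': "0 \<le> z i / \<sigma>" "z i / \<sigma> \<le> v" "z i / \<sigma> \<le> z i" if "i < n" for i
      using z[OF that] \<sigma> v divide_left_mono[of 1 \<sigma> "z i"] by (auto simp: \<sigma>_def field_simps)
    have "(\<Sum>i<n. l i * (z i / \<sigma>) powr p) = (\<Sum>i<n. l i * z i powr p) / \<sigma> powr p"
      using z \<sigma> by (simp add: powr_divide sum_divide_distrib)
    then have "(\<Sum>i<n. l i * (z i / \<sigma>) powr p) powr (1 / p) = (\<Sum>i<n. l i * z i powr p) powr (1 / p) / \<sigma>"
      using l z \<sigma> p by (simp add: powr_divide sum_nonneg powr_powr_inverse)
    then have "\<phi> ((K^2 / 2) powr (1 / p) / \<sigma> * (\<Sum>i<n. l i * z i powr p) powr (1 / p))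
        \<le> (\<Sum>i<n. l i * \<phi> (z i / \<sigma>))"
      using orlicz_power_mean_bound_below[OF phi p K _ l, of v "\<lambda>i. z i / \<sigma>"] growth z' by simp
    also have "\<dots> \<le> (\<Sum>i<n. l i * \<phi> (z i))"
      using l z' by (intro sum_mono mult_left_mono orlicz_function_mono[OF phi]) auto
    finally show "\<phi> ((K^2 / 2) powr (1 / p) / \<sigma> * (\<Sum>i<n. l i * z i powr p) powr (1 / p))
        \<le> 1 * (\<Sum>i<n. l i * \<phi> (z i)) + 0" by simp
  qed (use K \<sigma> range in auto)
  then show ?thesis using K \<sigma> by (intro p_convex_if_luxemburg_p_convex[OF phi p]) auto
qed

lemma delta_star_imp_p_convex:
  assumes "measure_regime M r" "orlicz_function \<phi>" "0 < p" "delta_star r p \<phi>"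
  shows "p_convex M \<phi> p"
proof (cases r)
  case All_Args
  then show ?thesis using assms by (intro delta_star_imp_p_convex_All) auto
next
  case Large_Args
  then show ?thesis using assms by (intro delta_star_imp_p_convex_Large) auto
next
  case Small_Args
  then show ?thesis using assms by (intro delta_star_imp_p_convex_Small) auto
qed

lemma p_convex_imp_upper_p_estimate: "p_convex M \<phi> p \<Longrightarrow> upper_p_estimate M \<phi> p"
  unfolding p_convex_def upper_p_estimate_def by blast

theorem mainTheorem6:
  fixes M :: "'a measure" and \<phi> :: "real \<Rightarrow> real" and p :: real and r :: regime
  assumes "sigma_finite_measure M"
    and "measure_regime M r"
    and "orlicz_function \<phi>"
    and "0 < p"
    and "lower_index r \<phi> > 0"
  shows "(p_convex M \<phi> p \<longleftrightarrow> upper_p_estimate M \<phi> p) \<and>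
         (upper_p_estimate M \<phi> p \<longleftrightarrow> delta_star r p \<phi>)"
  using p_convex_imp_upper_p_estimate upper_p_estimate_imp_delta_star[OF assms(1-4)]
    delta_star_imp_p_convex[OF assms(2-4)]
  by blast

end
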